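(* Let $H$ be a Hilbert space, $\mathcal{A}=B(H)$ and let $S$ be the unilateral shift on $H_{\mathcal{A}}$ ($Se_k=e_{k+1}$, $k\in\mathbb{N}$). Then $$\sigma^{\mathcal{A}}(S)=Z\cup W\cup\{T\in B(H)\mid T\text{ is not right invertible}\},$$ where $W$ and $Z$ are defined as follows. For $T\in B(H)$ let $N_T=\{Y\in B(H)\mid TY=0\}$ be the set of right annihilators of $T$, and for right invertible $T$ let $B_T$ denote a right inverse of $T$. $W$ is the set of all right invertible $T\in B(H)$ for which there exists a nonzero sequence $\{Y_n\}\subseteq N_T$ such that the sequence $(Y_1,\;B_TY_1+Y_2,\;B_T^2Y_1+B_TY_2+Y_3,\;\dots)$ belongs to $l_2(B(H))$. $Z$ is the set of all right invertible $T\in B(H)$ for which there is no sequence $\{Y_n\}\subseteq N_T$ such that the sequence $(B_T+Y_1,\;B_T^2+B_TY_1+Y_2,\;B_T^3+B_T^2Y_1+B_TY_2+Y_3,\;\dots)$ belongs to $l_2(B(H))$.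
   Context: For a unital $C^*$-algebra $\mathcal{A}$, $H_{\mathcal{A}}=l_2(\mathcal{A})$ is the standard Hilbert $C^*$-module of sequences $(x_1,x_2,\dots)$ in $\mathcal{A}$ with $\sum_k x_k^*x_k$ norm-convergent, inner product $\langle x,y\rangle=\sum_k x_k^*y_k$; $\{e_k\}$ is its standard orthonormal basis. $B^a(H_{\mathcal{A}})$ denotes the bounded adjointable $\mathcal{A}$-linear operators on $H_{\mathcal{A}}$. For $\alpha\in\mathcal{A}$, $\alpha I$ is the operator $(x_k)\mapsto(\alpha x_k)$. For $F\in B^a(H_{\mathcal{A}})$, $\sigma^{\mathcal{A}}(F)=\{\alpha\in\mathcal{A}\mid F-\alpha I$ is not invertible in $B^a(H_{\mathcal{A}})\}$. *)

theory Defs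
  imports "HOL-Analysis.Analysis"
begin

text \<open>A complex Hilbert space is modelled as a real Hilbert space (type class
  real_inner + complete_space) together with a complex structure J
  (multiplication by i): J o J = -id and J orthogonal.  The complex inner product
  is then x \<bullet> y + i (x \<bullet> J y) (up to convention), and the
  complex-linear bounded operators B(H) are exactly the real bounded linear
  operators commuting with J.  The Hilbert-space adjoint coincides with the
  real adjoint.\<close>

definition cstruct :: "('h::real_inner \<Rightarrow>\<^sub>L 'h) \<Rightarrow> bool" where
  "cstruct J \<longleftrightarrow> J o\<^sub>L J = - id_blinfun \<and> (\<forall>x y. inner (J x) (J y) = inner x y)"

definition BH :: "('h::real_inner \<Rightarrow>\<^sub>L 'h) \<Rightarrow> ('h \<Rightarrow>\<^sub>L 'h) set" where
  "BH J = {T. T o\<^sub>L J = J o\<^sub>L T}"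

definition adj :: "('h::real_inner \<Rightarrow>\<^sub>L 'h) \<Rightarrow> ('h \<Rightarrow>\<^sub>L 'h)" where
  "adj T = Blinfun (adjoint (blinfun_apply T))"

definition l2 :: "('h::{real_inner,complete_space} \<Rightarrow>\<^sub>L 'h) \<Rightarrow> (nat \<Rightarrow> ('h \<Rightarrow>\<^sub>L 'h)) set" where
  "l2 J = {x. (\<forall>k. x k \<in> BH J) \<and> summable (\<lambda>k. adj (x k) o\<^sub>L x k)}"

definition ip :: "(nat \<Rightarrow> ('h::{real_inner,complete_space} \<Rightarrow>\<^sub>L 'h)) \<Rightarrow> (nat \<Rightarrow> ('h \<Rightarrow>\<^sub>L 'h)) \<Rightarrow> ('h \<Rightarrow>\<^sub>L 'h)" where
  "ip x y = (\<Sum>k. adj (x k) o\<^sub>L y k)"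

definition hnorm :: "(nat \<Rightarrow> ('h::{real_inner,complete_space} \<Rightarrow>\<^sub>L 'h)) \<Rightarrow> real" where
  "hnorm x = sqrt (norm (ip x x))"

text \<open>F is a bounded adjointable A-linear operator on H_A (an element of B^a(H_A)),
  considered on the carrier l2 J.  H_A is a right A-module: x a = (x_k a).\<close>
definition badj :: "('h::{real_inner,complete_space} \<Rightarrow>\<^sub>L 'h)
    \<Rightarrow> ((nat \<Rightarrow> ('h \<Rightarrow>\<^sub>L 'h)) \<Rightarrow> (nat \<Rightarrow> ('h \<Rightarrow>\<^sub>L 'h))) \<Rightarrow> bool" where
  "badj J F \<longleftrightarrow>
     (\<forall>x\<in>l2 J. F x \<in> l2 J)
   \<and> (\<forall>x\<in>l2 J. \<forall>y\<in>l2 J. F (\<lambda>k. x k + y k) = (\<lambda>k. F x k + F y k))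
   \<and> (\<forall>x\<in>l2 J. \<forall>a\<in>BH J. F (\<lambda>k. x k o\<^sub>L a) = (\<lambda>k. F x k o\<^sub>L a))
   \<and> (\<exists>C. \<forall>x\<in>l2 J. hnorm (F x) \<le> C * hnorm x)
   \<and> (\<exists>G. (\<forall>y\<in>l2 J. G y \<in> l2 J) \<and> (\<forall>x\<in>l2 J. \<forall>y\<in>l2 J. ip (F x) y = ip x (G y)))"

definition binv :: "('h::{real_inner,complete_space} \<Rightarrow>\<^sub>L 'h)
    \<Rightarrow> ((nat \<Rightarrow> ('h \<Rightarrow>\<^sub>L 'h)) \<Rightarrow> (nat \<Rightarrow> ('h \<Rightarrow>\<^sub>L 'h))) \<Rightarrow> bool" where
  "binv J F \<longleftrightarrow> badj J F \<and> (\<exists>G. badj J G \<and> (\<forall>x\<in>l2 J. G (F x) = x \<and> F (G x) = x))"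

definition shift :: "(nat \<Rightarrow> ('h::real_normed_vector \<Rightarrow>\<^sub>L 'h)) \<Rightarrow> (nat \<Rightarrow> ('h \<Rightarrow>\<^sub>L 'h))" where
  "shift x = (\<lambda>k. case k of 0 \<Rightarrow> 0 | Suc j \<Rightarrow> x j)"

definition scalI :: "('h::real_normed_vector \<Rightarrow>\<^sub>L 'h) \<Rightarrow> (nat \<Rightarrow> ('h \<Rightarrow>\<^sub>L 'h)) \<Rightarrow> (nat \<Rightarrow> ('h \<Rightarrow>\<^sub>L 'h))" where
  "scalI a x = (\<lambda>k. a o\<^sub>L x k)"

definition Aspec :: "('h::{real_inner,complete_space} \<Rightarrow>\<^sub>L 'h)
    \<Rightarrow> ((nat \<Rightarrow> ('h \<Rightarrow>\<^sub>L 'h)) \<Rightarrow> (nat \<Rightarrow> ('h \<Rightarrow>\<^sub>L 'h))) \<Rightarrow> ('h \<Rightarrow>\<^sub>L 'h) set" where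
  "Aspec J F = {a \<in> BH J. \<not> binv J (\<lambda>x k. F x k - scalI a x k)}"

definition rinv :: "('h::real_inner \<Rightarrow>\<^sub>L 'h) \<Rightarrow> ('h \<Rightarrow>\<^sub>L 'h) \<Rightarrow> bool" where
  "rinv J T \<longleftrightarrow> (\<exists>R\<in>BH J. T o\<^sub>L R = id_blinfun)"

definition ann :: "('h::real_inner \<Rightarrow>\<^sub>L 'h) \<Rightarrow> ('h \<Rightarrow>\<^sub>L 'h) \<Rightarrow> ('h \<Rightarrow>\<^sub>L 'h) set" where
  "ann J T = {Y \<in> BH J. T o\<^sub>L Y = 0}"

definition bpow :: "('h::real_normed_vector \<Rightarrow>\<^sub>L 'h) \<Rightarrow> nat \<Rightarrow> ('h \<Rightarrow>\<^sub>L 'h)" where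
  "bpow B n = (((\<lambda>X. B o\<^sub>L X) ^^ n) id_blinfun)"

text \<open>W and Z, relative to a choice B of right inverses (B T = B_T); sequences
  indexed from 0, so the k-th term is sum_{j<=k} B_T^(k-j) Y_j.\<close>
definition Wset :: "('h::{real_inner,complete_space} \<Rightarrow>\<^sub>L 'h)
    \<Rightarrow> (('h \<Rightarrow>\<^sub>L 'h) \<Rightarrow> ('h \<Rightarrow>\<^sub>L 'h)) \<Rightarrow> ('h \<Rightarrow>\<^sub>L 'h) set" where
  "Wset J B = {T \<in> BH J. rinv J T \<and>
     (\<exists>Y. (\<forall>n. Y n \<in> ann J T) \<and> Y \<noteq> (\<lambda>_. 0) \<and>
          (\<lambda>k. \<Sum>j\<le>k. bpow (B T) (k - j) o\<^sub>L Y j) \<in> l2 J)}"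

definition Zset :: "('h::{real_inner,complete_space} \<Rightarrow>\<^sub>L 'h)
    \<Rightarrow> (('h \<Rightarrow>\<^sub>L 'h) \<Rightarrow> ('h \<Rightarrow>\<^sub>L 'h)) \<Rightarrow> ('h \<Rightarrow>\<^sub>L 'h) set" where
  "Zset J B = {T \<in> BH J. rinv J T \<and>
     \<not> (\<exists>Y. (\<forall>n. Y n \<in> ann J T) \<and>
          (\<lambda>k. bpow (B T) (Suc k) + (\<Sum>j\<le>k. bpow (B T) (k - j) o\<^sub>L Y j)) \<in> l2 J)}"

end

theory Submission
  imports Defs
begin

text \<open>Write F = S - aI, so (F x)_0 = -a x_0 and (F x)_(k+1) = x_k - a x_(k+1). Given a right
  inverse b of a, the solutions of F u = -e_0 are exactly the sequences
  b^(k+1) + sum_(j<=k) b^(k-j) Y_j and the kernel of F consists exactly of the sequences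
  sum_(j<=k) b^(k-j) Y_j, with all Y_j in N_a. Hence F u = -e_0 is solvable in H_A precisely
  when a is not in Z (and solvability alone makes a right invertible), and F is injective
  precisely when a is not in W; an inverse of F gives both properties.

  Conversely, let F u = -e_0 and F be injective. Then S u + e_0 - u a lies in the kernel of F,
  so it vanishes: beta = u_0 is a two-sided inverse of a and u_k = beta^(k+1). Since u lies in
  H_A, the norms of the powers of beta tend to 0, hence some power has norm at most 1/2 and
  these norms are summable. Then the lower triangular Toeplitz operator
  y |-> (- sum_(j<=k) beta^(k-j+1) y_j)_k inverts F, and it is bounded (by Young's inequality
  for the convolution with the norms of the powers) and adjointable (its adjoint is the upper
  triangular Toeplitz operator built from the adjoints of the powers).\<close>

section \<open>Riesz representation and Hilbert-space adjoints\<close>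

lemma parallelogram_law:
  fixes a b :: "'a::real_inner"
  shows "(norm (a - b))\<^sup>2 + (norm (a + b))\<^sup>2 = 2 * (norm a)\<^sup>2 + 2 * (norm b)\<^sup>2"
  by (simp add: power2_norm_eq_inner inner_diff_left inner_diff_right
      inner_add_left inner_add_right inner_commute)

lemma infdist_sq_approx:
  fixes M :: "'a::real_normed_vector set"
  assumes "M \<noteq> {}" "0 < e"
  shows "\<exists>m\<in>M. (norm (x - m))\<^sup>2 < (infdist x M)\<^sup>2 + e"
proof -
  define d where "d = infdist x M"
  have "0 \<le> d" unfolding d_def by (rule infdist_nonneg)
  define e' where "e' = min 1 (e / (2 * d + 2))"
  have "0 < e'" using \<open>0 \<le> d\<close> assms(2) by (simp add: e'_def)
  hence "infdist x M < d + e'" by (simp add: d_def)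
  then obtain m where m: "m \<in> M" "dist x m < d + e'"
    unfolding infdist_notempty[OF assms(1)]
    using cINF_less_iff[OF assms(1) bdd_below_image_dist] by blast
  have "(norm (x - m))\<^sup>2 < (d + e')\<^sup>2"
    using m \<open>0 \<le> d\<close> by (simp add: dist_norm power_strict_mono)
  also have "\<dots> \<le> d\<^sup>2 + e' * (2 * d + 2)"
    using \<open>0 < e'\<close> by (simp add: e'_def power2_eq_square algebra_simps)
  also have "e' * (2 * d + 2) \<le> e"
  proof -
    have "e' \<le> e / (2 * d + 2)" by (simp add: e'_def)
    thus ?thesis using \<open>0 \<le> d\<close> by (simp add: pos_le_divide_eq)
  qed
  finally show ?thesis using m by (auto simp: d_def)
qed

lemma minimizing_sequence_Cauchy:
  fixes M :: "'a::real_inner set"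
  assumes "convex M" "\<And>n. m n \<in> M" and d_le: "\<And>y. y \<in> M \<Longrightarrow> d \<le> norm (x - y)" and "0 \<le> d"
    and m_close: "\<And>n. (norm (x - m n))\<^sup>2 < d\<^sup>2 + inverse (real (Suc n))"
  shows "Cauchy m"
proof (rule CauchyI)
  fix e :: real assume e: "0 < e"
  obtain N where N: "inverse (real (Suc N)) < e\<^sup>2 / 4"
    using e by (metis reals_Archimedean zero_less_divide_iff zero_less_numeral zero_less_power)
  have "norm (m i - m j) < e" if ij: "N \<le> i" "N \<le> j" for i j
  proof -
    have inv_le: "inverse (real (Suc k)) \<le> inverse (real (Suc N))" if "N \<le> k" for k
      using that by (simp add: le_imp_inverse_le)
    \<comment> \<open>the midpoint lies in M, so it is at distance at least d from x\<close>
    have "(1/2) *\<^sub>R m i + (1/2) *\<^sub>R m j \<in> M"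
      using assms(1,2) by (intro convexD) auto
    moreover have "x - ((1/2) *\<^sub>R m i + (1/2) *\<^sub>R m j) = (1/2) *\<^sub>R ((x - m i) + (x - m j))"
      by (simp add: algebra_simps flip: scaleR_add_left)
    ultimately have "2 * d \<le> norm ((x - m i) + (x - m j))"
      using d_le by fastforce
    hence "(2 * d)\<^sup>2 \<le> (norm ((x - m i) + (x - m j)))\<^sup>2"
      using \<open>0 \<le> d\<close> by (intro power_mono) auto
    with parallelogram_law[of "x - m i" "x - m j"]
    have "(norm (m i - m j))\<^sup>2 \<le> 2 * (norm (x - m i))\<^sup>2 + 2 * (norm (x - m j))\<^sup>2 - 4 * d\<^sup>2"
      by (simp add: power2_eq_square norm_minus_commute)
    also have "\<dots> < 4 * inverse (real (Suc N))"
      using m_close[of i] m_close[of j] inv_le[OF ij(1)] inv_le[OF ij(2)] by linarith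
    also have "\<dots> < e\<^sup>2" using N by simp
    finally show ?thesis using e by (simp add: power_less_imp_less_base)
  qed
  thus "\<exists>M. \<forall>i\<ge>M. \<forall>j\<ge>M. norm (m i - m j) < e" by blast
qed

lemma nearest_point_exists:
  fixes M :: "'h::{real_inner,complete_space} set"
  assumes "closed M" "convex M" "M \<noteq> {}"
  shows "\<exists>p\<in>M. \<forall>m\<in>M. norm (x - p) \<le> norm (x - m)"
proof -
  define d where "d = infdist x M"
  have "0 \<le> d" unfolding d_def by (rule infdist_nonneg)
  have d_le: "d \<le> norm (x - y)" if "y \<in> M" for y
    using infdist_le[OF that, of x] by (simp add: d_def dist_norm)
  have "\<exists>m\<in>M. (norm (x - m))\<^sup>2 < d\<^sup>2 + inverse (real (Suc n))" for n
    using infdist_sq_approx[OF assms(3), of "inverse (real (Suc n))" x] by (simp add: d_def)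
  then obtain m where mM: "\<And>n. m n \<in> M"
    and m_close: "\<And>n. (norm (x - m n))\<^sup>2 < d\<^sup>2 + inverse (real (Suc n))"
    by metis
  from minimizing_sequence_Cauchy[OF assms(2) mM d_le \<open>0 \<le> d\<close> m_close]
  obtain p where lim: "m \<longlonglongrightarrow> p" using Cauchy_convergent_iff convergent_def by blast
  have "p \<in> M" using \<open>closed M\<close> closed_sequentially lim mM by blast
  moreover have "(norm (x - p))\<^sup>2 \<le> d\<^sup>2"
  proof (rule LIMSEQ_le)
    show "(\<lambda>n. (norm (x - m n))\<^sup>2) \<longlonglongrightarrow> (norm (x - p))\<^sup>2"
      by (intro tendsto_intros lim)
    show "(\<lambda>n. d\<^sup>2 + inverse (real (Suc n))) \<longlonglongrightarrow> d\<^sup>2"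
      using tendsto_add[OF tendsto_const LIMSEQ_inverse_real_of_nat, of "d\<^sup>2"] by simp
    show "\<exists>N. \<forall>n\<ge>N. (norm (x - m n))\<^sup>2 \<le> d\<^sup>2 + inverse (real (Suc n))"
      using m_close less_imp_le by blast
  qed
  hence "norm (x - p) \<le> norm (x - m)" if "m \<in> M" for m
    using d_le[OF that] \<open>0 \<le> d\<close> by (meson order_trans power2_le_imp_le)
  ultimately show ?thesis by blast
qed

lemma nearest_point_subspace_orthogonal:
  fixes M :: "'h::real_inner set"
  assumes "subspace M" "p \<in> M" "y \<in> M" and nearest: "\<And>m. m \<in> M \<Longrightarrow> norm (x - p) \<le> norm (x - m)"
  shows "inner (x - p) y = 0"
proof (cases "y = 0")
  case False
  define w where "w = x - p"
  define t where "t = inner w y / (norm y)\<^sup>2"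
  have ny: "0 < (norm y)\<^sup>2" using False by simp
  have "p + t *\<^sub>R y \<in> M" using assms by (simp add: subspace_add subspace_scale)
  from nearest[OF this] have "(norm w)\<^sup>2 \<le> (norm (w - t *\<^sub>R y))\<^sup>2"
    by (simp add: w_def algebra_simps power_mono)
  also have "\<dots> = (norm w)\<^sup>2 - 2 * t * inner w y + t\<^sup>2 * (norm y)\<^sup>2"
    unfolding power2_norm_eq_inner
    by (simp add: inner_diff_left inner_diff_right inner_commute algebra_simps power2_eq_square)
  also have "t\<^sup>2 * (norm y)\<^sup>2 = t * inner w y" using ny by (simp add: t_def power2_eq_square)
  finally have "(inner w y)\<^sup>2 / (norm y)\<^sup>2 \<le> 0" by (simp add: t_def power2_eq_square)
  hence "(inner w y)\<^sup>2 \<le> 0" using ny by (simp add: divide_le_0_iff)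
  thus ?thesis by (simp add: w_def)
qed simp

lemma riesz_representation:
  fixes f :: "'h::{real_inner,complete_space} \<Rightarrow> real"
  assumes "bounded_linear f"
  shows "\<exists>z. \<forall>x. f x = inner z x"
proof (cases "\<forall>x. f x = 0")
  case True thus ?thesis by (intro exI[of _ 0]) simp
next
  case False
  then obtain x0 where "f x0 \<noteq> 0" by auto
  interpret f: bounded_linear f by fact
  let ?M = "{x. f x = 0}"
  have "closed ?M"
    by (intro closed_Collect_eq continuous_on_const linear_continuous_on assms)
  moreover have "subspace ?M" unfolding subspace_def by (simp add: f.add f.scaleR f.zero)
  moreover have "?M \<noteq> {}" using subspace_0[OF \<open>subspace ?M\<close>] by blast
  ultimately obtain p where p: "p \<in> ?M" and nearest: "\<And>m. m \<in> ?M \<Longrightarrow> norm (x0 - p) \<le> norm (x0 - m)"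
    using nearest_point_exists[of ?M x0] subspace_imp_convex by metis
  \<comment> \<open>w spans the orthogonal complement of the kernel of f\<close>
  define w where "w = x0 - p"
  have fw: "f w \<noteq> 0" using p \<open>f x0 \<noteq> 0\<close> by (simp add: w_def f.diff)
  hence w_pos: "0 < inner w w" using f.zero by force
  have w_inner: "inner w v = f v / f w * inner w w" for v
  proof -
    have "v - (f v / f w) *\<^sub>R w \<in> ?M" using fw by (simp add: f.diff f.scaleR)
    from nearest_point_subspace_orthogonal[OF \<open>subspace ?M\<close> p this nearest]
    show ?thesis by (simp add: w_def inner_diff_right)
  qed
  have "f v = inner ((f w / inner w w) *\<^sub>R w) v" for v
    using w_inner[of v] w_pos fw by (simp add: field_simps)
  thus ?thesis by blast
qed

lemma bounded_linear_adjoint_works: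
  fixes f :: "'h::{real_inner,complete_space} \<Rightarrow> 'h"
  assumes "bounded_linear f"
  shows "f x \<bullet> y = x \<bullet> adjoint f y"
proof -
  have "\<exists>z. \<forall>x. f x \<bullet> y = x \<bullet> z" for y
    using riesz_representation[OF bounded_linear_compose[OF bounded_linear_inner_left assms]]
    by (auto simp: inner_commute)
  hence "\<exists>f'. \<forall>x y. f x \<bullet> y = x \<bullet> f' y" by metis
  from someI_ex[OF this] show ?thesis unfolding adjoint_def by blast
qed

lemma bounded_linear_adjoint:
  fixes f :: "'h::{real_inner,complete_space} \<Rightarrow> 'h"
  assumes "bounded_linear f"
  shows "bounded_linear (adjoint f)"
proof -
  interpret f: bounded_linear f by fact
  note adj = bounded_linear_adjoint_works[OF assms]
  have "linear (adjoint f)"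
    by (rule linearI; rule vector_eq_ldot[THEN iffD1], rule allI)
       (simp_all flip: adj add: inner_add_right)
  moreover obtain K where K: "\<And>x. norm (f x) \<le> norm x * K" and "0 < K"
    using f.pos_bounded by blast
  have "norm (adjoint f y) \<le> norm y * K" for y
  proof -
    have "(norm (adjoint f y))\<^sup>2 = f (adjoint f y) \<bullet> y" by (simp add: adj power2_norm_eq_inner)
    also have "\<dots> \<le> norm (f (adjoint f y)) * norm y" by (rule norm_cauchy_schwarz)
    also have "\<dots> \<le> norm (adjoint f y) * K * norm y" using K by (simp add: mult_right_mono)
    finally show ?thesis
      using \<open>0 < K\<close> by (cases "adjoint f y = 0")
        (auto simp: power2_eq_square mult_le_cancel_left_pos algebra_simps)
  qed
  ultimately show ?thesis unfolding bounded_linear_def bounded_linear_axioms_def by blast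
qed

section \<open>Operator-norm completeness of bounded operators\<close>

text \<open>The library proves completeness of bounded operators only for codomains of sort banach,
  which does not contain the sort {real_inner, complete_space} of our Hilbert space.\<close>

lemma norm_blinfun_diff_apply_le:
  fixes X Y :: "'a::real_normed_vector \<Rightarrow>\<^sub>L 'b::real_normed_vector"
  shows "norm (X x - Y x) \<le> norm (X - Y) * norm x"
  using norm_blinfun[of "X - Y" x] by (simp add: blinfun.diff_left)

lemma Cauchy_blinfun_apply:
  fixes X :: "nat \<Rightarrow> 'a::real_normed_vector \<Rightarrow>\<^sub>L 'b::real_normed_vector"
  assumes "Cauchy X"
  shows "Cauchy (\<lambda>n. X n x)"
proof (rule CauchyI)
  fix e :: real assume e: "0 < e"
  hence "0 < e / (norm x + 1)" by (simp add: add_nonneg_pos)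
  from CauchyD[OF assms this] obtain M
    where M: "\<And>m n. M \<le> m \<Longrightarrow> M \<le> n \<Longrightarrow> norm (X m - X n) < e / (norm x + 1)"
    by blast
  have "norm (X m x - X n x) < e" if "M \<le> m" "M \<le> n" for m n
  proof -
    have "norm (X m x - X n x) \<le> norm (X m - X n) * norm x" by (rule norm_blinfun_diff_apply_le)
    also have "\<dots> \<le> e / (norm x + 1) * norm x"
      using M[OF that] by (intro mult_right_mono) auto
    also have "\<dots> < e" using e by (simp add: pos_divide_less_eq add_nonneg_pos)
    finally show ?thesis .
  qed
  thus "\<exists>M. \<forall>m\<ge>M. \<forall>n\<ge>M. norm (X m x - X n x) < e" by blast
qed

lemma bounded_linear_pointwise_limit:
  fixes X :: "nat \<Rightarrow> 'a::real_normed_vector \<Rightarrow>\<^sub>L 'b::real_normed_vector"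
  assumes "Bseq X" and v: "\<And>x. (\<lambda>n. X n x) \<longlonglongrightarrow> v x"
  shows "bounded_linear v"
proof -
  have "linear v"
  proof
    show "v (a + b) = v a + v b" for a b
      using LIMSEQ_unique[OF v[of "a + b"]] tendsto_add[OF v[of a] v[of b]]
      by (simp add: blinfun.add_right)
    show "v (r *\<^sub>R a) = r *\<^sub>R v a" for r a
      using LIMSEQ_unique[OF v[of "r *\<^sub>R a"]] tendsto_scaleR[OF tendsto_const v[of a]]
      by (simp add: blinfun.scaleR_right)
  qed
  moreover obtain B where B: "\<And>n. norm (X n) \<le> B"
    using assms(1) by (auto simp: Bseq_def)
  have "norm (v x) \<le> norm x * B" for x
  proof (rule tendsto_le[OF trivial_limit_sequentially tendsto_const])
    show "(\<lambda>n. norm (X n x)) \<longlonglongrightarrow> norm (v x)" by (intro tendsto_intros v)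
    have "norm (X n x) \<le> norm x * B" for n
      using norm_blinfun[of "X n" x] mult_right_mono[OF B[of n] norm_ge_zero[of x]]
      by (simp add: mult.commute)
    thus "\<forall>\<^sub>F n in sequentially. norm (X n x) \<le> norm x * B" by simp
  qed
  ultimately show ?thesis
    unfolding bounded_linear_def bounded_linear_axioms_def by blast
qed

lemma Cauchy_blinfun_convergent:
  fixes X :: "nat \<Rightarrow> 'a::real_normed_vector \<Rightarrow>\<^sub>L 'b::{real_normed_vector,complete_space}"
  assumes "Cauchy X"
  shows "convergent X"
proof -
  obtain v where v: "\<And>x. (\<lambda>n. X n x) \<longlonglongrightarrow> v x"
    using Cauchy_blinfun_apply[OF assms] unfolding Cauchy_convergent_iff convergent_def by metis
  have V: "blinfun_apply (Blinfun v) = v"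
    using bounded_linear_pointwise_limit[OF Cauchy_Bseq[OF assms] v]
    by (rule bounded_linear_Blinfun_apply)
  have "X \<longlonglongrightarrow> Blinfun v"
  proof (rule LIMSEQ_I)
    fix e :: real assume e: "0 < e"
    then obtain M where M: "\<And>m n. M \<le> m \<Longrightarrow> M \<le> n \<Longrightarrow> norm (X m - X n) < e / 2"
      using CauchyD[OF assms, of "e / 2"] by auto
    have "norm (X n - Blinfun v) \<le> e / 2" if n: "M \<le> n" for n
    proof (rule norm_blinfun_bound)
      fix x
      show "norm ((X n - Blinfun v) x) \<le> e / 2 * norm x"
      proof (rule tendsto_le[OF trivial_limit_sequentially tendsto_const])
        show "(\<lambda>m. norm (X n x - X m x)) \<longlonglongrightarrow> norm ((X n - Blinfun v) x)"
          by (simp add: blinfun.diff_left V) (intro tendsto_intros v)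
        have "norm (X n x - X m x) \<le> e / 2 * norm x" if "M \<le> m" for m
          using norm_blinfun_diff_apply_le[of "X n" x "X m"] M[OF n that]
          by (smt (verit) mult_right_mono norm_ge_zero)
        thus "\<forall>\<^sub>F m in sequentially. norm (X n x - X m x) \<le> e / 2 * norm x"
          by (rule eventually_sequentiallyI)
      qed
    qed (use e in simp)
    with e show "\<exists>M. \<forall>n\<ge>M. norm (X n - Blinfun v) < e" by force
  qed
  thus ?thesis unfolding convergent_def by blast
qed

lemma summable_blinfun_Cauchy:
  fixes f :: "nat \<Rightarrow> 'a::real_normed_vector \<Rightarrow>\<^sub>L 'b::{real_normed_vector,complete_space}"
  shows "summable f \<longleftrightarrow> (\<forall>e>0. \<exists>N. \<forall>m\<ge>N. \<forall>n. norm (sum f {m..<n}) < e)"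
proof -
  have diff: "(\<Sum>i<n. f i) - (\<Sum>i<m. f i) = sum f {m..<n}" if "m \<le> n" for m n
    using that by (simp add: sum_diff_nat_ivl atLeast0LessThan[symmetric])
  have "Cauchy (\<lambda>n. \<Sum>i<n. f i) \<longleftrightarrow> (\<forall>e>0. \<exists>N. \<forall>m\<ge>N. \<forall>n. norm (sum f {m..<n}) < e)"
    unfolding Cauchy_def dist_norm
  proof (intro iffI allI impI)
    fix e :: real assume "\<forall>e>0. \<exists>M. \<forall>m\<ge>M. \<forall>n\<ge>M. norm ((\<Sum>i<m. f i) - (\<Sum>i<n. f i)) < e" "0 < e"
    then obtain N where N: "\<And>m n. N \<le> m \<Longrightarrow> N \<le> n \<Longrightarrow> norm ((\<Sum>i<n. f i) - (\<Sum>i<m. f i)) < e"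
      by blast
    have "norm (sum f {m..<n}) < e" if "N \<le> m" for m n
      using N[OF that, of n] diff[of m n] \<open>0 < e\<close> that by (cases "m \<le> n") auto
    thus "\<exists>N. \<forall>m\<ge>N. \<forall>n. norm (sum f {m..<n}) < e" by blast
  next
    fix e :: real assume "\<forall>e>0. \<exists>N. \<forall>m\<ge>N. \<forall>n. norm (sum f {m..<n}) < e" "0 < e"
    then obtain N where N: "\<And>m n. N \<le> m \<Longrightarrow> norm (sum f {m..<n}) < e" by blast
    have "norm ((\<Sum>i<m. f i) - (\<Sum>i<n. f i)) < e" if "N \<le> m" "N \<le> n" for m n
    proof (cases "m \<le> n")
      case True thus ?thesis using N[OF that(1), of n] diff[of m n] by (metis norm_minus_commute)
    next
      case False thus ?thesis using N[OF that(2), of m] diff[of n m] by simp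
    qed
    thus "\<exists>M. \<forall>m\<ge>M. \<forall>n\<ge>M. norm ((\<Sum>i<m. f i) - (\<Sum>i<n. f i)) < e" by blast
  qed
  thus ?thesis
    using Cauchy_blinfun_convergent convergent_Cauchy by (auto simp: summable_iff_convergent)
qed

lemma summable_blinfun_comparison:
  fixes f :: "nat \<Rightarrow> 'a::real_normed_vector \<Rightarrow>\<^sub>L 'b::{real_normed_vector,complete_space}"
  assumes "summable g" and "\<And>n. norm (f n) \<le> g n"
  shows "summable f"
  unfolding summable_blinfun_Cauchy
proof (intro allI impI)
  fix e :: real assume "0 < e"
  then obtain N where N: "\<And>m n. N \<le> m \<Longrightarrow> norm (sum g {m..<n}) < e"
    using assms(1) summable_Cauchy by blast
  have "norm (sum f {m..<n}) < e" if "N \<le> m" for m n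
    using norm_sum[of f "{m..<n}"] sum_mono[of "{m..<n}" "\<lambda>k. norm (f k)" g] assms(2) N[OF that, of n]
    by fastforce
  thus "\<exists>N. \<forall>m\<ge>N. \<forall>n. norm (sum f {m..<n}) < e" by blast
qed

section \<open>The C*-algebra B(H)\<close>

lemma adj_apply:
  fixes T :: "'h::{real_inner,complete_space} \<Rightarrow>\<^sub>L 'h"
  shows "blinfun_apply (adj T) = adjoint (blinfun_apply T)"
  unfolding adj_def
  by (rule bounded_linear_Blinfun_apply[OF bounded_linear_adjoint[OF blinfun.bounded_linear_right]])

lemma inner_apply_adj:
  fixes T :: "'h::{real_inner,complete_space} \<Rightarrow>\<^sub>L 'h"
  shows "inner (T x) y = inner x (adj T y)"
  unfolding adj_apply by (rule bounded_linear_adjoint_works[OF blinfun.bounded_linear_right])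

lemma inner_adj_apply:
  fixes T :: "'h::{real_inner,complete_space} \<Rightarrow>\<^sub>L 'h"
  shows "inner (adj T y) x = inner y (T x)"
  by (metis inner_apply_adj inner_commute)

lemma adj_eqI:
  fixes T U :: "'h::{real_inner,complete_space} \<Rightarrow>\<^sub>L 'h"
  assumes "\<And>x y. inner (T x) y = inner x (U y)"
  shows "adj T = U"
proof (rule blinfun_eqI)
  show "adj T y = U y" for y
    by (rule vector_eq_ldot[THEN iffD1], rule allI) (simp add: assms flip: inner_apply_adj)
qed

lemma adj_adj [simp]:
  fixes T :: "'h::{real_inner,complete_space} \<Rightarrow>\<^sub>L 'h"
  shows "adj (adj T) = T"
  by (rule adj_eqI) (simp add: inner_adj_apply)

lemma adj_zero [simp]: "adj (0 :: 'h::{real_inner,complete_space} \<Rightarrow>\<^sub>L 'h) = 0"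
  by (rule adj_eqI) simp

lemma adj_id [simp]: "adj (id_blinfun :: 'h::{real_inner,complete_space} \<Rightarrow>\<^sub>L 'h) = id_blinfun"
  by (rule adj_eqI) simp

lemma adj_compose:
  fixes S T :: "'h::{real_inner,complete_space} \<Rightarrow>\<^sub>L 'h"
  shows "adj (S o\<^sub>L T) = adj T o\<^sub>L adj S"
  by (rule adj_eqI) (simp add: inner_apply_adj)

lemma adj_diff:
  fixes S T :: "'h::{real_inner,complete_space} \<Rightarrow>\<^sub>L 'h"
  shows "adj (S - T) = adj S - adj T"
  by (rule adj_eqI) (simp add: inner_apply_adj blinfun.diff_left inner_diff_left inner_diff_right)

lemma norm_blinfun_sq_bound:
  fixes T :: "'a::real_normed_vector \<Rightarrow>\<^sub>L 'b::real_normed_vector"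
  assumes "\<And>x. (norm (T x))\<^sup>2 \<le> M * (norm x)\<^sup>2" and "0 \<le> M"
  shows "(norm T)\<^sup>2 \<le> M"
proof -
  have "norm T \<le> sqrt M"
  proof (rule norm_blinfun_bound)
    show "norm (T x) \<le> sqrt M * norm x" for x
      using assms(1)[of x] \<open>0 \<le> M\<close>
      by (metis real_le_rsqrt real_sqrt_mult real_sqrt_abs abs_norm_cancel)
  qed (use \<open>0 \<le> M\<close> in simp)
  thus ?thesis using \<open>0 \<le> M\<close> by (metis norm_ge_zero power_mono real_sqrt_pow2)
qed

lemma norm_sq_le_norm_adj_compose:
  fixes T :: "'h::{real_inner,complete_space} \<Rightarrow>\<^sub>L 'h"
  shows "(norm T)\<^sup>2 \<le> norm (adj T o\<^sub>L T)"
proof (rule norm_blinfun_sq_bound)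
  fix x
  have "(norm (T x))\<^sup>2 = inner x ((adj T o\<^sub>L T) x)"
    by (simp add: power2_norm_eq_inner inner_apply_adj)
  also have "\<dots> \<le> norm x * norm ((adj T o\<^sub>L T) x)" by (rule norm_cauchy_schwarz)
  also have "\<dots> \<le> norm x * (norm (adj T o\<^sub>L T) * norm x)"
    by (intro mult_left_mono norm_blinfun norm_ge_zero)
  finally show "(norm (T x))\<^sup>2 \<le> norm (adj T o\<^sub>L T) * (norm x)\<^sup>2"
    by (simp add: power2_eq_square algebra_simps)
qed simp

lemma norm_adj [simp]:
  fixes T :: "'h::{real_inner,complete_space} \<Rightarrow>\<^sub>L 'h"
  shows "norm (adj T) = norm T"
proof -
  have le: "norm (adj S) \<le> norm S" for S :: "'h \<Rightarrow>\<^sub>L 'h"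
  proof -
    have "(norm (adj S))\<^sup>2 \<le> norm (S o\<^sub>L adj S)"
      using norm_sq_le_norm_adj_compose[of "adj S"] by simp
    also have "\<dots> \<le> norm S * norm (adj S)" by (rule norm_blinfun_compose)
    finally show ?thesis
      by (cases "norm (adj S) = 0") (auto simp: power2_eq_square mult_le_cancel_right)
  qed
  show ?thesis using le[of T] le[of "adj T"] by simp
qed

lemma blinfun_compose_assoc: "(a o\<^sub>L b) o\<^sub>L c = a o\<^sub>L (b o\<^sub>L c)"
  by (rule blinfun_eqI) simp

lemma blinfun_compose_id [simp]: "id_blinfun o\<^sub>L a = a" "a o\<^sub>L id_blinfun = a"
  by (rule blinfun_eqI; simp)+

interpretation compose: bounded_bilinear blinfun_compose
  by (rule bounded_bilinear_blinfun_compose)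

lemma adj_cstruct:
  fixes J :: "'h::{real_inner,complete_space} \<Rightarrow>\<^sub>L 'h"
  assumes "cstruct J"
  shows "adj J = - J"
proof (rule adj_eqI)
  fix x y
  have JJ: "J (J z) = - z" for z
    using assms unfolding cstruct_def
    by (metis blinfun_apply_blinfun_compose blinfun_apply_id_blinfun blinfun.minus_left)
  have "inner (J x) y = inner (J x) (J (- J y))" by (simp add: blinfun.minus_right JJ)
  also have "\<dots> = inner x (- J y)" using assms unfolding cstruct_def by blast
  finally show "inner (J x) y = inner x ((- J) y)" by (simp add: blinfun.minus_left)
qed

lemma BH_adj:
  fixes J :: "'h::{real_inner,complete_space} \<Rightarrow>\<^sub>L 'h"
  assumes "cstruct J" "T \<in> BH J"
  shows "adj T \<in> BH J"
proof -
  have "adj (T o\<^sub>L J) = adj (J o\<^sub>L T)" using assms(2) by (simp add: BH_def)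
  thus ?thesis
    by (simp add: BH_def adj_compose adj_cstruct[OF assms(1)] compose.minus_left compose.minus_right)
qed

lemma BH_compose: "S \<in> BH J \<Longrightarrow> T \<in> BH J \<Longrightarrow> S o\<^sub>L T \<in> BH J"
  by (simp add: BH_def blinfun_compose_assoc) (metis blinfun_compose_assoc)

lemma BH_add: "S \<in> BH J \<Longrightarrow> T \<in> BH J \<Longrightarrow> S + T \<in> BH J"
  by (simp add: BH_def compose.add_left compose.add_right)

lemma BH_diff: "S \<in> BH J \<Longrightarrow> T \<in> BH J \<Longrightarrow> S - T \<in> BH J"
  by (simp add: BH_def compose.diff_left compose.diff_right)

lemma BH_minus: "T \<in> BH J \<Longrightarrow> - T \<in> BH J"
  by (simp add: BH_def compose.minus_left compose.minus_right)

lemma BH_zero [simp]: "0 \<in> BH J"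
  by (simp add: BH_def)

lemma BH_id [simp]: "id_blinfun \<in> BH J"
  by (simp add: BH_def)

lemma BH_sum: "(\<And>k. k \<in> K \<Longrightarrow> f k \<in> BH J) \<Longrightarrow> sum f K \<in> BH J"
  by (induction K rule: infinite_finite_induct) (auto intro: BH_add)

lemma closed_BH: "closed (BH J)"
  unfolding BH_def
  by (intro closed_Collect_eq linear_continuous_on compose.bounded_linear_left
      compose.bounded_linear_right)

lemma BH_suminf: "(\<And>k. f k \<in> BH J) \<Longrightarrow> summable f \<Longrightarrow> suminf f \<in> BH J"
  using closed_BH[of J] closed_sequentially[of "BH J" "\<lambda>n. \<Sum>i<n. f i" "suminf f"]
  by (auto intro: BH_sum simp: summable_LIMSEQ)

lemma bpow_0 [simp]: "bpow B 0 = id_blinfun"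
  by (simp add: bpow_def)

lemma bpow_Suc: "bpow B (Suc n) = B o\<^sub>L bpow B n"
  by (simp add: bpow_def)

lemma bpow_add: "bpow B (m + n) = bpow B m o\<^sub>L bpow B n"
  by (induction m) (simp_all add: bpow_Suc blinfun_compose_assoc)

lemma bpow_Suc': "bpow B (Suc n) = bpow B n o\<^sub>L B"
  using bpow_add[of B n 1] by (simp add: bpow_Suc)

lemma bpow_BH: "B \<in> BH J \<Longrightarrow> bpow B n \<in> BH J"
  by (induction n) (auto simp: bpow_Suc intro: BH_compose)

section \<open>The standard Hilbert module l2(B(H))\<close>

lemma inner_sum_adj_compose_apply:
  fixes x y :: "nat \<Rightarrow> 'h::{real_inner,complete_space} \<Rightarrow>\<^sub>L 'h"
  shows "inner g ((\<Sum>k\<in>K. adj (x k) o\<^sub>L y k) h) = (\<Sum>k\<in>K. inner (x k g) (y k h))"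
  by (simp add: blinfun.sum_left inner_sum_right inner_apply_adj)

lemma norm_sum_adj_compose_le:
  fixes x y :: "nat \<Rightarrow> 'h::{real_inner,complete_space} \<Rightarrow>\<^sub>L 'h"
  assumes "0 \<le> Mx" "0 \<le> My"
    and x: "\<And>h. (\<Sum>k\<in>K. (norm (x k h))\<^sup>2) \<le> Mx * (norm h)\<^sup>2"
    and y: "\<And>h. (\<Sum>k\<in>K. (norm (y k h))\<^sup>2) \<le> My * (norm h)\<^sup>2"
  shows "norm (\<Sum>k\<in>K. adj (x k) o\<^sub>L y k) \<le> sqrt (Mx * My)"
proof (rule norm_blinfun_bound)
  fix h
  define T where "T = (\<Sum>k\<in>K. adj (x k) o\<^sub>L y k)"
  have "inner g (T h) \<le> sqrt Mx * norm g * (sqrt My * norm h)" for g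
  proof -
    have "inner g (T h) = (\<Sum>k\<in>K. inner (x k g) (y k h))"
      unfolding T_def by (rule inner_sum_adj_compose_apply)
    also have "\<dots> \<le> (\<Sum>k\<in>K. norm (x k g) * norm (y k h))"
      by (intro sum_mono norm_cauchy_schwarz)
    also have "\<dots> \<le> sqrt ((\<Sum>k\<in>K. norm (x k g) * norm (y k h))\<^sup>2)" by simp
    also have "\<dots> \<le> sqrt ((\<Sum>k\<in>K. (norm (x k g))\<^sup>2) * (\<Sum>k\<in>K. (norm (y k h))\<^sup>2))"
      by (rule real_sqrt_le_mono[OF Cauchy_Schwarz_ineq_sum])
    also have "\<dots> \<le> sqrt ((Mx * (norm g)\<^sup>2) * (My * (norm h)\<^sup>2))"
      using assms by (intro real_sqrt_le_mono mult_mono x y) (auto intro: sum_nonneg)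
    also have "\<dots> = sqrt Mx * norm g * (sqrt My * norm h)" by (simp add: real_sqrt_mult)
    finally show ?thesis .
  qed
  from this[of "T h"] have "norm (T h) * norm (T h) \<le> norm (T h) * (sqrt (Mx * My) * norm h)"
    by (simp add: power2_norm_eq_inner[symmetric] power2_eq_square real_sqrt_mult algebra_simps)
  thus "norm (T h) \<le> sqrt (Mx * My) * norm h"
    using assms by (cases "T h = 0") (auto simp: T_def mult_le_cancel_left_pos)
qed (use assms in simp)

lemma sum_sq_norm_apply_le:
  fixes x :: "nat \<Rightarrow> 'h::{real_inner,complete_space} \<Rightarrow>\<^sub>L 'h"
  shows "(\<Sum>k\<in>K. (norm (x k h))\<^sup>2) \<le> norm (\<Sum>k\<in>K. adj (x k) o\<^sub>L x k) * (norm h)\<^sup>2"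
proof -
  let ?T = "\<Sum>k\<in>K. adj (x k) o\<^sub>L x k"
  have "(\<Sum>k\<in>K. (norm (x k h))\<^sup>2) = inner h (?T h)"
    by (simp add: inner_sum_adj_compose_apply power2_norm_eq_inner)
  also have "\<dots> \<le> norm h * norm (?T h)" by (rule norm_cauchy_schwarz)
  also have "\<dots> \<le> norm h * (norm ?T * norm h)" by (intro mult_left_mono norm_blinfun norm_ge_zero)
  finally show ?thesis by (simp add: power2_eq_square algebra_simps)
qed

text \<open>The Cauchy criterion in operator norm for the series of the x_k^* x_k amounts to uniformly
  small tails of the sums of the (norm (x_k h))^2 relative to (norm h)^2; unlike the former,
  this condition is obviously preserved under pointwise domination.\<close>

definition sq_sums_bounded :: "(nat \<Rightarrow> ('a::real_normed_vector \<Rightarrow>\<^sub>L 'b::real_normed_vector)) \<Rightarrow> real \<Rightarrow> bool" where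
  "sq_sums_bounded x M \<longleftrightarrow> (\<forall>n h. (\<Sum>k<n. (norm (x k h))\<^sup>2) \<le> M * (norm h)\<^sup>2)"

definition uniform_sq_tails :: "(nat \<Rightarrow> ('a::real_normed_vector \<Rightarrow>\<^sub>L 'b::real_normed_vector)) \<Rightarrow> bool" where
  "uniform_sq_tails x \<longleftrightarrow>
     (\<forall>e>0. \<exists>N. \<forall>m\<ge>N. \<forall>n h. (\<Sum>k\<in>{m..<n}. (norm (x k h))\<^sup>2) \<le> e * (norm h)\<^sup>2)"

lemma uniform_sq_tailsD:
  assumes "uniform_sq_tails x" "0 < e"
  obtains N where "\<And>m n h. N \<le> m \<Longrightarrow> (\<Sum>k\<in>{m..<n}. (norm (x k h))\<^sup>2) \<le> e * (norm h)\<^sup>2"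
  using assms unfolding uniform_sq_tails_def by meson

lemma summable_adj_compose:
  fixes x y :: "nat \<Rightarrow> 'h::{real_inner,complete_space} \<Rightarrow>\<^sub>L 'h"
  assumes "uniform_sq_tails x" "uniform_sq_tails y"
  shows "summable (\<lambda>k. adj (x k) o\<^sub>L y k)"
  unfolding summable_blinfun_Cauchy
proof (intro allI impI)
  fix e :: real assume "0 < e"
  hence "0 < e / 2" by simp
  obtain N1 where N1: "\<And>m n h. N1 \<le> m \<Longrightarrow> (\<Sum>k\<in>{m..<n}. (norm (x k h))\<^sup>2) \<le> (e/2) * (norm h)\<^sup>2"
    using uniform_sq_tailsD[OF assms(1) \<open>0 < e / 2\<close>] by blast
  obtain N2 where N2: "\<And>m n h. N2 \<le> m \<Longrightarrow> (\<Sum>k\<in>{m..<n}. (norm (y k h))\<^sup>2) \<le> (e/2) * (norm h)\<^sup>2"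
    using uniform_sq_tailsD[OF assms(2) \<open>0 < e / 2\<close>] by blast
  have "norm (\<Sum>k\<in>{m..<n}. adj (x k) o\<^sub>L y k) < e" if "max N1 N2 \<le> m" for m n
  proof -
    have "norm (\<Sum>k\<in>{m..<n}. adj (x k) o\<^sub>L y k) \<le> sqrt ((e/2)\<^sup>2)"
      using \<open>0 < e\<close> that by (simp only: power2_eq_square) (intro norm_sum_adj_compose_le N1 N2; simp)
    thus ?thesis using \<open>0 < e\<close> by simp
  qed
  thus "\<exists>N. \<forall>m\<ge>N. \<forall>n. norm (\<Sum>k\<in>{m..<n}. adj (x k) o\<^sub>L y k) < e" by blast
qed

lemma l2_iff:
  fixes x :: "nat \<Rightarrow> 'h::{real_inner,complete_space} \<Rightarrow>\<^sub>L 'h"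
  shows "x \<in> l2 J \<longleftrightarrow> (\<forall>k. x k \<in> BH J) \<and> uniform_sq_tails x"
proof -
  have "uniform_sq_tails x" if sm: "summable (\<lambda>k. adj (x k) o\<^sub>L x k)"
    unfolding uniform_sq_tails_def
  proof (intro allI impI)
    fix e :: real assume "0 < e"
    then obtain N where "\<And>m n. N \<le> m \<Longrightarrow> norm (\<Sum>k\<in>{m..<n}. adj (x k) o\<^sub>L x k) \<le> e"
      using sm[unfolded summable_blinfun_Cauchy] by (meson less_imp_le)
    with sum_sq_norm_apply_le[where x=x]
    show "\<exists>N. \<forall>m\<ge>N. \<forall>n h. (\<Sum>k\<in>{m..<n}. (norm (x k h))\<^sup>2) \<le> e * (norm h)\<^sup>2"
      by (meson mult_right_mono order_trans zero_le_power2)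
  qed
  thus ?thesis using summable_adj_compose[of x x] by (auto simp: l2_def)
qed

lemma l2_BH: "x \<in> l2 J \<Longrightarrow> x k \<in> BH J"
  by (simp add: l2_def)

lemma l2_uniform_sq_tails:
  fixes x :: "nat \<Rightarrow> 'h::{real_inner,complete_space} \<Rightarrow>\<^sub>L 'h"
  shows "x \<in> l2 J \<Longrightarrow> uniform_sq_tails x"
  by (simp add: l2_iff)

lemma l2_sq_sums_bounded:
  fixes x :: "nat \<Rightarrow> 'h::{real_inner,complete_space} \<Rightarrow>\<^sub>L 'h"
  assumes "x \<in> l2 J"
  shows "sq_sums_bounded x ((hnorm x)\<^sup>2)"
  unfolding sq_sums_bounded_def
proof (intro allI)
  fix n h
  let ?P = "\<Sum>k. adj (x k) o\<^sub>L x k"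
  have "(\<lambda>n. \<Sum>k<n. adj (x k) o\<^sub>L x k) \<longlonglongrightarrow> ?P"
    using assms by (simp add: l2_def summable_LIMSEQ)
  hence "(\<lambda>n. inner h ((\<Sum>k<n. adj (x k) o\<^sub>L x k) h)) \<longlonglongrightarrow> inner h (?P h)"
    by (intro tendsto_intros blinfun.tendsto)
  hence "(\<lambda>n. \<Sum>k<n. (norm (x k h))\<^sup>2) \<longlonglongrightarrow> inner h (?P h)"
    by (simp add: inner_sum_adj_compose_apply power2_norm_eq_inner)
  moreover have "incseq (\<lambda>n. \<Sum>k<n. (norm (x k h))\<^sup>2)"
    by (intro incseq_SucI) simp
  ultimately have "(\<Sum>k<n. (norm (x k h))\<^sup>2) \<le> inner h (?P h)" using incseq_le by blast
  also have "\<dots> \<le> norm h * (norm ?P * norm h)"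
    by (meson norm_cauchy_schwarz norm_blinfun norm_ge_zero mult_left_mono order_trans)
  finally show "(\<Sum>k<n. (norm (x k h))\<^sup>2) \<le> (hnorm x)\<^sup>2 * (norm h)\<^sup>2"
    by (simp add: hnorm_def ip_def power2_eq_square mult_ac)
qed

lemma hnorm_le_sqrt:
  fixes x :: "nat \<Rightarrow> 'h::{real_inner,complete_space} \<Rightarrow>\<^sub>L 'h"
  assumes "x \<in> l2 J" "sq_sums_bounded x M" "0 \<le> M"
  shows "hnorm x \<le> sqrt M"
proof -
  have "norm (\<Sum>k. adj (x k) o\<^sub>L x k) \<le> M"
  proof (rule tendsto_le[OF trivial_limit_sequentially tendsto_const])
    show "(\<lambda>n. norm (\<Sum>k<n. adj (x k) o\<^sub>L x k)) \<longlonglongrightarrow> norm (\<Sum>k. adj (x k) o\<^sub>L x k)"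
      using assms(1) by (intro tendsto_intros summable_LIMSEQ) (simp add: l2_def)
    have "norm (\<Sum>k<n. adj (x k) o\<^sub>L x k) \<le> sqrt (M * M)" for n
      using assms(2,3) unfolding sq_sums_bounded_def by (intro norm_sum_adj_compose_le) auto
    thus "\<forall>\<^sub>F n in sequentially. norm (\<Sum>k<n. adj (x k) o\<^sub>L x k) \<le> M"
      using assms(3) by simp
  qed
  thus ?thesis by (simp add: hnorm_def ip_def)
qed

lemma norm_le_hnorm:
  fixes x :: "nat \<Rightarrow> 'h::{real_inner,complete_space} \<Rightarrow>\<^sub>L 'h"
  assumes "x \<in> l2 J"
  shows "norm (x k) \<le> hnorm x"
proof -
  have "(norm (x k))\<^sup>2 \<le> (hnorm x)\<^sup>2"
  proof (rule norm_blinfun_sq_bound)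
    fix h
    have "(norm (x k h))\<^sup>2 \<le> (\<Sum>i<Suc k. (norm (x i h))\<^sup>2)" by (simp add: sum_nonneg)
    also have "\<dots> \<le> (hnorm x)\<^sup>2 * (norm h)\<^sup>2"
      using l2_sq_sums_bounded[OF assms] unfolding sq_sums_bounded_def by blast
    finally show "(norm (x k h))\<^sup>2 \<le> (hnorm x)\<^sup>2 * (norm h)\<^sup>2" .
  qed simp
  thus ?thesis by (rule power2_le_imp_le) (simp add: hnorm_def)
qed

lemma summable_ip:
  fixes x y :: "nat \<Rightarrow> 'h::{real_inner,complete_space} \<Rightarrow>\<^sub>L 'h"
  assumes "x \<in> l2 J" "y \<in> l2 J"
  shows "summable (\<lambda>k. adj (x k) o\<^sub>L y k)"
  using assms by (intro summable_adj_compose l2_uniform_sq_tails)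

lemma sum_sq_norm_dominated:
  fixes y x1 x2 :: "nat \<Rightarrow> 'a::real_normed_vector \<Rightarrow>\<^sub>L 'b::real_normed_vector"
  assumes "\<And>k. norm (y k h) \<le> a * norm (x1 k h) + b * norm (x2 k h)"
  shows "(\<Sum>k\<in>K. (norm (y k h))\<^sup>2)
    \<le> 2 * a\<^sup>2 * (\<Sum>k\<in>K. (norm (x1 k h))\<^sup>2) + 2 * b\<^sup>2 * (\<Sum>k\<in>K. (norm (x2 k h))\<^sup>2)"
proof -
  have "(norm (y k h))\<^sup>2 \<le> 2 * a\<^sup>2 * (norm (x1 k h))\<^sup>2 + 2 * b\<^sup>2 * (norm (x2 k h))\<^sup>2" for k
  proof -
    have "(norm (y k h))\<^sup>2 \<le> (a * norm (x1 k h) + b * norm (x2 k h))\<^sup>2"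
      using assms[of k] by (intro power_mono) auto
    also have "\<dots> \<le> 2 * (a * norm (x1 k h))\<^sup>2 + 2 * (b * norm (x2 k h))\<^sup>2"
      using zero_le_power2[of "a * norm (x1 k h) - b * norm (x2 k h)"]
      unfolding power2_sum power2_diff by linarith
    finally show ?thesis by (simp add: power_mult_distrib)
  qed
  hence "(\<Sum>k\<in>K. (norm (y k h))\<^sup>2)
      \<le> (\<Sum>k\<in>K. 2 * a\<^sup>2 * (norm (x1 k h))\<^sup>2 + 2 * b\<^sup>2 * (norm (x2 k h))\<^sup>2)"
    by (rule sum_mono)
  thus ?thesis by (simp add: sum.distrib sum_distrib_left)
qed

lemma uniform_sq_tails_dominated:
  fixes y x1 x2 :: "nat \<Rightarrow> 'a::real_normed_vector \<Rightarrow>\<^sub>L 'b::real_normed_vector"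
  assumes "uniform_sq_tails x1" "uniform_sq_tails x2"
    and dom: "\<And>k h. norm (y k h) \<le> a * norm (x1 k h) + b * norm (x2 k h)"
  shows "uniform_sq_tails y"
  unfolding uniform_sq_tails_def
proof (intro allI impI)
  fix e :: real assume "0 < e"
  define c where "c = 2 * a\<^sup>2 + 2 * b\<^sup>2 + 1"
  have "0 < c" by (simp add: c_def add_nonneg_pos)
  with \<open>0 < e\<close> have "0 < e / c" by simp
  obtain N1 where N1: "\<And>m n h. N1 \<le> m \<Longrightarrow> (\<Sum>k\<in>{m..<n}. (norm (x1 k h))\<^sup>2) \<le> (e/c) * (norm h)\<^sup>2"
    using uniform_sq_tailsD[OF assms(1) \<open>0 < e / c\<close>] by blast
  obtain N2 where N2: "\<And>m n h. N2 \<le> m \<Longrightarrow> (\<Sum>k\<in>{m..<n}. (norm (x2 k h))\<^sup>2) \<le> (e/c) * (norm h)\<^sup>2"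
    using uniform_sq_tailsD[OF assms(2) \<open>0 < e / c\<close>] by blast
  have "(\<Sum>k\<in>{m..<n}. (norm (y k h))\<^sup>2) \<le> e * (norm h)\<^sup>2" if "max N1 N2 \<le> m" for m n h
  proof -
    have "(\<Sum>k\<in>{m..<n}. (norm (y k h))\<^sup>2)
        \<le> 2 * a\<^sup>2 * ((e/c) * (norm h)\<^sup>2) + 2 * b\<^sup>2 * ((e/c) * (norm h)\<^sup>2)"
    proof -
      have "(\<Sum>k\<in>{m..<n}. (norm (y k h))\<^sup>2)
          \<le> 2 * a\<^sup>2 * (\<Sum>k\<in>{m..<n}. (norm (x1 k h))\<^sup>2) + 2 * b\<^sup>2 * (\<Sum>k\<in>{m..<n}. (norm (x2 k h))\<^sup>2)"
        by (rule sum_sq_norm_dominated[OF dom])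
      also have "\<dots> \<le> 2 * a\<^sup>2 * ((e/c) * (norm h)\<^sup>2) + 2 * b\<^sup>2 * ((e/c) * (norm h)\<^sup>2)"
        using that by (intro add_mono mult_left_mono N1 N2) auto
      finally show ?thesis .
    qed
    also have "\<dots> = (2 * a\<^sup>2 + 2 * b\<^sup>2) * ((e/c) * (norm h)\<^sup>2)"
      by (simp add: algebra_simps)
    also have "\<dots> \<le> c * ((e/c) * (norm h)\<^sup>2)"
      by (intro mult_right_mono mult_nonneg_nonneg less_imp_le[OF \<open>0 < e / c\<close>] zero_le_power2)
        (simp add: c_def)
    finally show ?thesis using \<open>0 < c\<close> by simp
  qed
  thus "\<exists>N. \<forall>m\<ge>N. \<forall>n h. (\<Sum>k\<in>{m..<n}. (norm (y k h))\<^sup>2) \<le> e * (norm h)\<^sup>2" by blast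
qed

lemma sq_sums_bounded_dominated:
  fixes y x1 x2 :: "nat \<Rightarrow> 'a::real_normed_vector \<Rightarrow>\<^sub>L 'b::real_normed_vector"
  assumes "sq_sums_bounded x1 M1" "sq_sums_bounded x2 M2"
    and dom: "\<And>k h. norm (y k h) \<le> a * norm (x1 k h) + b * norm (x2 k h)"
  shows "sq_sums_bounded y (2 * a\<^sup>2 * M1 + 2 * b\<^sup>2 * M2)"
  unfolding sq_sums_bounded_def
proof (intro allI)
  fix n h
  have "(\<Sum>k<n. (norm (y k h))\<^sup>2)
      \<le> 2 * a\<^sup>2 * (\<Sum>k<n. (norm (x1 k h))\<^sup>2) + 2 * b\<^sup>2 * (\<Sum>k<n. (norm (x2 k h))\<^sup>2)"
    by (rule sum_sq_norm_dominated[OF dom])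
  also have "\<dots> \<le> 2 * a\<^sup>2 * (M1 * (norm h)\<^sup>2) + 2 * b\<^sup>2 * (M2 * (norm h)\<^sup>2)"
    using assms(1,2) unfolding sq_sums_bounded_def by (intro add_mono mult_left_mono) auto
  finally show "(\<Sum>k<n. (norm (y k h))\<^sup>2) \<le> (2 * a\<^sup>2 * M1 + 2 * b\<^sup>2 * M2) * (norm h)\<^sup>2"
    by (simp add: algebra_simps)
qed

lemma shift_0 [simp]: "shift x 0 = 0"
  and shift_Suc [simp]: "shift x (Suc k) = x k"
  by (simp_all add: shift_def)

text \<open>For m = 0 the truncated subtraction m - 1 = 0 is harmless, as shift x 0 = 0.\<close>

lemma sum_sq_norm_shift:
  "(\<Sum>k\<in>{m..<n}. (norm (shift x k h))\<^sup>2) = (\<Sum>k\<in>{m - 1..<n - 1}. (norm (x k h))\<^sup>2)"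
proof (cases "m = 0")
  case True
  thus ?thesis
    by (cases n) (simp_all add: atLeast0LessThan sum.lessThan_Suc_shift del: sum.lessThan_Suc)
next
  case False
  then obtain m' where "m = Suc m'" by (cases m) auto
  thus ?thesis
    by (cases n) (simp, simp only: diff_Suc_1 sum.shift_bounds_Suc_ivl shift_Suc)
qed

lemma uniform_sq_tails_shift:
  assumes "uniform_sq_tails x"
  shows "uniform_sq_tails (shift x)"
  unfolding uniform_sq_tails_def sum_sq_norm_shift
proof (intro allI impI)
  fix e :: real assume "0 < e"
  then obtain N where N: "\<And>m n h. N \<le> m \<Longrightarrow> (\<Sum>k\<in>{m..<n}. (norm (x k h))\<^sup>2) \<le> e * (norm h)\<^sup>2"
    using uniform_sq_tailsD[OF assms] by blast
  have "(\<Sum>k\<in>{m - 1..<n - 1}. (norm (x k h))\<^sup>2) \<le> e * (norm h)\<^sup>2" if "Suc N \<le> m" for m n h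
    using that by (intro N) simp
  thus "\<exists>N. \<forall>m\<ge>N. \<forall>n h. (\<Sum>k\<in>{m - 1..<n - 1}. (norm (x k h))\<^sup>2) \<le> e * (norm h)\<^sup>2"
    by blast
qed

lemma sq_sums_bounded_shift: "sq_sums_bounded x M \<Longrightarrow> sq_sums_bounded (shift x) M"
  unfolding sq_sums_bounded_def atLeast0LessThan[symmetric] sum_sq_norm_shift by simp

lemma uniform_sq_tails_Suc:
  assumes "uniform_sq_tails x"
  shows "uniform_sq_tails (\<lambda>k. x (Suc k))"
  unfolding uniform_sq_tails_def
proof (intro allI impI)
  fix e :: real assume "0 < e"
  then obtain N where N: "\<And>m n h. N \<le> m \<Longrightarrow> (\<Sum>k\<in>{m..<n}. (norm (x k h))\<^sup>2) \<le> e * (norm h)\<^sup>2"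
    using uniform_sq_tailsD[OF assms] by blast
  have "(\<Sum>k\<in>{m..<n}. (norm (x (Suc k) h))\<^sup>2) \<le> e * (norm h)\<^sup>2" if "N \<le> m" for m n h
    using N[where m="Suc m" and n="Suc n" and h=h] that by (simp only: sum.shift_bounds_Suc_ivl)
  thus "\<exists>N. \<forall>m\<ge>N. \<forall>n h. (\<Sum>k\<in>{m..<n}. (norm (x (Suc k) h))\<^sup>2) \<le> e * (norm h)\<^sup>2"
    by blast
qed

lemma l2_add:
  fixes x y :: "nat \<Rightarrow> 'h::{real_inner,complete_space} \<Rightarrow>\<^sub>L 'h"
  assumes "x \<in> l2 J" "y \<in> l2 J"
  shows "(\<lambda>k. x k + y k) \<in> l2 J"
proof -
  have "uniform_sq_tails (\<lambda>k. x k + y k)"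
    using l2_uniform_sq_tails[OF assms(1)] l2_uniform_sq_tails[OF assms(2)]
    by (rule uniform_sq_tails_dominated[where a=1 and b=1]) (simp add: blinfun.add_left norm_triangle_ineq)
  with assms show ?thesis by (simp add: l2_iff BH_add)
qed

lemma l2_diff:
  fixes x y :: "nat \<Rightarrow> 'h::{real_inner,complete_space} \<Rightarrow>\<^sub>L 'h"
  assumes "x \<in> l2 J" "y \<in> l2 J"
  shows "(\<lambda>k. x k - y k) \<in> l2 J"
proof -
  have "uniform_sq_tails (\<lambda>k. x k - y k)"
    using l2_uniform_sq_tails[OF assms(1)] l2_uniform_sq_tails[OF assms(2)]
    by (rule uniform_sq_tails_dominated[where a=1 and b=1]) (simp add: blinfun.diff_left norm_triangle_ineq4)
  with assms show ?thesis by (simp add: l2_iff BH_diff)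
qed

lemma l2_compose_left:
  fixes x :: "nat \<Rightarrow> 'h::{real_inner,complete_space} \<Rightarrow>\<^sub>L 'h"
  assumes "c \<in> BH J" "x \<in> l2 J"
  shows "(\<lambda>k. c o\<^sub>L x k) \<in> l2 J"
proof -
  have "uniform_sq_tails (\<lambda>k. c o\<^sub>L x k)"
    using l2_uniform_sq_tails[OF assms(2)] l2_uniform_sq_tails[OF assms(2)]
    by (rule uniform_sq_tails_dominated[where a="norm c" and b=0]) (simp add: norm_blinfun)
  with assms show ?thesis by (simp add: l2_iff BH_compose)
qed

lemma l2_minus:
  fixes x :: "nat \<Rightarrow> 'h::{real_inner,complete_space} \<Rightarrow>\<^sub>L 'h"
  assumes "x \<in> l2 J"
  shows "(\<lambda>k. - x k) \<in> l2 J"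
  using l2_compose_left[OF BH_minus[OF BH_id] assms] by (simp add: compose.minus_left)

lemma l2_compose_right:
  fixes x :: "nat \<Rightarrow> 'h::{real_inner,complete_space} \<Rightarrow>\<^sub>L 'h"
  assumes "c \<in> BH J" "x \<in> l2 J"
  shows "(\<lambda>k. x k o\<^sub>L c) \<in> l2 J"
proof -
  have "uniform_sq_tails (\<lambda>k. x k o\<^sub>L c)"
    unfolding uniform_sq_tails_def
  proof (intro allI impI)
    fix e :: real assume "0 < e"
    define d where "d = (norm c)\<^sup>2 + 1"
    have "0 < d" by (simp add: d_def add_nonneg_pos)
    with \<open>0 < e\<close> have "0 < e / d" by simp
    then obtain N where N: "\<And>m n h. N \<le> m \<Longrightarrow> (\<Sum>k\<in>{m..<n}. (norm (x k h))\<^sup>2) \<le> (e/d) * (norm h)\<^sup>2"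
      using uniform_sq_tailsD[OF l2_uniform_sq_tails[OF assms(2)]] by blast
    have c_bound: "(norm (c h))\<^sup>2 \<le> d * (norm h)\<^sup>2" for h
    proof -
      have "(norm (c h))\<^sup>2 \<le> (norm c)\<^sup>2 * (norm h)\<^sup>2"
        unfolding power_mult_distrib[symmetric] by (intro power_mono norm_blinfun) auto
      thus ?thesis unfolding d_def distrib_right by (simp add: add_increasing2)
    qed
    have "(\<Sum>k\<in>{m..<n}. (norm ((x k o\<^sub>L c) h))\<^sup>2) \<le> e * (norm h)\<^sup>2" if "N \<le> m" for m n h
    proof -
      have "(\<Sum>k\<in>{m..<n}. (norm ((x k o\<^sub>L c) h))\<^sup>2) \<le> (e/d) * (norm (c h))\<^sup>2"
        using N[OF that] by simp
      also have "\<dots> \<le> (e/d) * (d * (norm h)\<^sup>2)"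
        using \<open>0 < e / d\<close> by (intro mult_left_mono c_bound) simp
      finally show ?thesis using \<open>0 < d\<close> by simp
    qed
    thus "\<exists>N. \<forall>m\<ge>N. \<forall>n h. (\<Sum>k\<in>{m..<n}. (norm ((x k o\<^sub>L c) h))\<^sup>2) \<le> e * (norm h)\<^sup>2"
      by blast
  qed
  with assms show ?thesis by (auto simp: l2_iff intro: BH_compose)
qed

lemma l2_shift:
  fixes x :: "nat \<Rightarrow> 'h::{real_inner,complete_space} \<Rightarrow>\<^sub>L 'h"
  assumes "x \<in> l2 J"
  shows "shift x \<in> l2 J"
  using assms unfolding l2_iff
  by (auto simp: shift_def uniform_sq_tails_shift[unfolded shift_def] split: nat.split)

lemma l2_Suc:
  fixes x :: "nat \<Rightarrow> 'h::{real_inner,complete_space} \<Rightarrow>\<^sub>L 'h"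
  assumes "x \<in> l2 J"
  shows "(\<lambda>k. x (Suc k)) \<in> l2 J"
  using assms by (simp add: l2_iff uniform_sq_tails_Suc)

lemma l2_zero: "(\<lambda>k. 0) \<in> l2 J"
  by (simp add: l2_def)

text \<open>The first basis vector of l2, written e_1 in the paper; sequences are indexed from 0.\<close>

definition e0 :: "nat \<Rightarrow> ('h::real_normed_vector \<Rightarrow>\<^sub>L 'h)" where
  "e0 k = (if k = 0 then id_blinfun else 0)"

lemma e0_0 [simp]: "e0 0 = id_blinfun"
  and e0_Suc [simp]: "e0 (Suc k) = 0"
  by (simp_all add: e0_def)

lemma l2_e0: "e0 \<in> l2 J"
proof -
  have "summable (\<lambda>k. adj (e0 k) o\<^sub>L e0 k :: 'a \<Rightarrow>\<^sub>L 'a)"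
    by (rule summable_finite[of "{0}"]) (auto simp: e0_def)
  thus ?thesis by (simp add: l2_def e0_def)
qed

section \<open>The operator S - aI and its adjoint\<close>

definition shift_sub :: "('h::real_normed_vector \<Rightarrow>\<^sub>L 'h) \<Rightarrow> (nat \<Rightarrow> ('h \<Rightarrow>\<^sub>L 'h)) \<Rightarrow> nat \<Rightarrow> ('h \<Rightarrow>\<^sub>L 'h)" where
  "shift_sub a x k = shift x k - (a o\<^sub>L x k)"

definition shift_sub_adj :: "('h::{real_inner,complete_space} \<Rightarrow>\<^sub>L 'h) \<Rightarrow> (nat \<Rightarrow> ('h \<Rightarrow>\<^sub>L 'h)) \<Rightarrow> nat \<Rightarrow> ('h \<Rightarrow>\<^sub>L 'h)" where
  "shift_sub_adj a y k = y (Suc k) - (adj a o\<^sub>L y k)"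

lemma shift_sub_0 [simp]: "shift_sub a x 0 = - (a o\<^sub>L x 0)"
  and shift_sub_Suc [simp]: "shift_sub a x (Suc k) = x k - (a o\<^sub>L x (Suc k))"
  by (simp_all add: shift_sub_def)

lemma Aspec_shift_iff: "a \<in> Aspec J shift \<longleftrightarrow> a \<in> BH J \<and> \<not> binv J (shift_sub a)"
proof -
  have "(\<lambda>x k. shift x k - scalI a x k) = shift_sub a"
    by (simp add: fun_eq_iff shift_sub_def scalI_def)
  thus ?thesis by (simp add: Aspec_def)
qed

lemma l2_shift_sub:
  fixes x :: "nat \<Rightarrow> 'h::{real_inner,complete_space} \<Rightarrow>\<^sub>L 'h"
  assumes "a \<in> BH J" "x \<in> l2 J"
  shows "shift_sub a x \<in> l2 J"
  unfolding shift_sub_def[abs_def] using assms by (intro l2_diff l2_shift l2_compose_left)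

lemma l2_shift_sub_adj:
  fixes y :: "nat \<Rightarrow> 'h::{real_inner,complete_space} \<Rightarrow>\<^sub>L 'h"
  assumes "cstruct J" "a \<in> BH J" "y \<in> l2 J"
  shows "shift_sub_adj a y \<in> l2 J"
  unfolding shift_sub_adj_def[abs_def] using assms by (intro l2_diff l2_Suc l2_compose_left BH_adj)

lemma ip_shift_sub:
  fixes x y :: "nat \<Rightarrow> 'h::{real_inner,complete_space} \<Rightarrow>\<^sub>L 'h"
  assumes "cstruct J" "a \<in> BH J" "x \<in> l2 J" "y \<in> l2 J"
  shows "ip (shift_sub a x) y = ip x (shift_sub_adj a y)"
proof -
  define t where "t k = adj (shift x k) o\<^sub>L y k" for k
  define t' where "t' k = adj (x k) o\<^sub>L (adj a o\<^sub>L y k)" for k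
  have s1: "summable (\<lambda>k. adj (x k) o\<^sub>L y (Suc k))"
    by (rule summable_ip[OF assms(3) l2_Suc[OF assms(4)]])
  have t_Suc: "t (Suc k) = adj (x k) o\<^sub>L y (Suc k)" for k by (simp add: t_def)
  have "summable (\<lambda>k. t (Suc k))" using s1 by (simp only: t_Suc)
  hence st: "summable t" by (simp only: summable_Suc_iff)
  have st': "summable t'" unfolding t'_def
    by (rule summable_ip[OF assms(3) l2_compose_left[OF BH_adj[OF assms(1,2)] assms(4)]])
  have "suminf t = (\<Sum>k. adj (x k) o\<^sub>L y (Suc k))"
    using suminf_split_head[OF st] by (simp add: t_Suc t_def)
  have "ip (shift_sub a x) y = (\<Sum>k. t k - t' k)"
    unfolding ip_def t_def t'_def
    by (simp add: shift_sub_def adj_diff adj_compose compose.diff_left blinfun_compose_assoc)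
  also have "\<dots> = suminf t - suminf t'" by (rule suminf_diff[OF st st', symmetric])
  also have "\<dots> = (\<Sum>k. (adj (x k) o\<^sub>L y (Suc k)) - t' k)"
    unfolding \<open>suminf t = _\<close> by (simp add: suminf_diff[OF s1 st'])
  also have "\<dots> = ip x (shift_sub_adj a y)"
    by (simp add: ip_def t'_def shift_sub_adj_def compose.diff_right)
  finally show ?thesis .
qed

lemma badj_shift_sub:
  fixes J :: "'h::{real_inner,complete_space} \<Rightarrow>\<^sub>L 'h"
  assumes "cstruct J" "a \<in> BH J"
  shows "badj J (shift_sub a)"
  unfolding badj_def
proof (intro conjI ballI)
  show "shift_sub a x \<in> l2 J" if "x \<in> l2 J" for x
    using assms(2) that by (rule l2_shift_sub)
  show "shift_sub a (\<lambda>k. x k + y k) = (\<lambda>k. shift_sub a x k + shift_sub a y k)" for x y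
    by (simp add: fun_eq_iff shift_sub_def shift_def compose.add_right split: nat.split)
  show "shift_sub a (\<lambda>k. x k o\<^sub>L c) = (\<lambda>k. shift_sub a x k o\<^sub>L c)" for x c
    by (simp add: fun_eq_iff shift_sub_def shift_def compose.diff_left blinfun_compose_assoc
        split: nat.split)
  show "\<exists>C. \<forall>x\<in>l2 J. hnorm (shift_sub a x) \<le> C * hnorm x"
  proof (intro exI ballI)
    fix x assume x: "x \<in> l2 J"
    let ?H = "(hnorm x)\<^sup>2"
    have "norm (shift_sub a x k h) \<le> 1 * norm (shift x k h) + norm a * norm (x k h)" for k h
      using norm_triangle_ineq4[of "shift x k h" "a (x k h)"] norm_blinfun[of a "x k h"]
      by (simp add: shift_sub_def blinfun.diff_left)
    from sq_sums_bounded_dominated[OF sq_sums_bounded_shift[OF l2_sq_sums_bounded[OF x]]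
        l2_sq_sums_bounded[OF x] this]
    have "sq_sums_bounded (shift_sub a x) (2 * 1\<^sup>2 * ?H + 2 * (norm a)\<^sup>2 * ?H)" .
    from hnorm_le_sqrt[OF l2_shift_sub[OF assms(2) x] this]
    have "hnorm (shift_sub a x) \<le> sqrt ((2 + 2 * (norm a)\<^sup>2) * ?H)"
      by (simp add: algebra_simps)
    thus "hnorm (shift_sub a x) \<le> sqrt (2 + 2 * (norm a)\<^sup>2) * hnorm x"
      by (simp add: real_sqrt_mult hnorm_def)
  qed
  show "\<exists>G. (\<forall>y\<in>l2 J. G y \<in> l2 J) \<and> (\<forall>x\<in>l2 J. \<forall>y\<in>l2 J. ip (shift_sub a x) y = ip x (G y))"
    using l2_shift_sub_adj[OF assms] ip_shift_sub[OF assms] by blast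
qed

section \<open>Kernel and range of S - aI for right invertible a\<close>

definition pow_conv :: "('h::real_normed_vector \<Rightarrow>\<^sub>L 'h) \<Rightarrow> (nat \<Rightarrow> ('h \<Rightarrow>\<^sub>L 'h)) \<Rightarrow> nat \<Rightarrow> ('h \<Rightarrow>\<^sub>L 'h)" where
  "pow_conv b Y k = (\<Sum>j\<le>k. bpow b (k - j) o\<^sub>L Y j)"

lemma pow_conv_0 [simp]: "pow_conv b Y 0 = Y 0"
  by (simp add: pow_conv_def)

lemma pow_conv_Suc: "pow_conv b Y (Suc k) = (b o\<^sub>L pow_conv b Y k) + Y (Suc k)"
proof -
  have "(\<Sum>j\<le>k. bpow b (Suc k - j) o\<^sub>L Y j) = (\<Sum>j\<le>k. b o\<^sub>L (bpow b (k - j) o\<^sub>L Y j))"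
    by (intro sum.cong refl) (simp add: Suc_diff_le bpow_Suc blinfun_compose_assoc)
  thus ?thesis by (simp add: pow_conv_def compose.sum_right)
qed

lemma pow_conv_eq_0_iff: "pow_conv b Y = (\<lambda>_. 0) \<longleftrightarrow> Y = (\<lambda>_. 0)"
proof
  assume "pow_conv b Y = (\<lambda>_. 0)"
  hence "Y k = 0" for k by (cases k) (metis pow_conv_0, metis add_0 compose.zero_right pow_conv_Suc)
  thus "Y = (\<lambda>_. 0)" by blast
qed (simp add: pow_conv_def fun_eq_iff)

lemma shift_sub_diff: "shift_sub a (\<lambda>k. x k - y k) = (\<lambda>k. shift_sub a x k - shift_sub a y k)"
  by (simp add: fun_eq_iff shift_sub_def shift_def compose.diff_right split: nat.split)

lemma shift_sub_bpow:
  assumes "a o\<^sub>L b = id_blinfun"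
  shows "shift_sub a (\<lambda>k. bpow b (Suc k)) = (\<lambda>k. - e0 k)"
proof
  show "shift_sub a (\<lambda>k. bpow b (Suc k)) k = - e0 k" for k
    using assms by (cases k) (simp_all add: bpow_Suc flip: blinfun_compose_assoc)
qed

lemma shift_sub_eq_0_iff:
  assumes "a o\<^sub>L b = id_blinfun" "b \<in> BH J" "\<And>k. v k \<in> BH J"
  shows "shift_sub a v = (\<lambda>_. 0) \<longleftrightarrow> (\<exists>Y. (\<forall>n. Y n \<in> ann J a) \<and> v = pow_conv b Y)"
proof
  assume v: "shift_sub a v = (\<lambda>_. 0)"
  have av_0: "a o\<^sub>L v 0 = 0" and av_Suc: "a o\<^sub>L v (Suc k) = v k" for k
    using fun_cong[OF v, of 0] fun_cong[OF v, of "Suc k"] by simp_all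
  define Y where "Y k = (case k of 0 \<Rightarrow> v 0 | Suc j \<Rightarrow> v (Suc j) - (b o\<^sub>L v j))" for k
  have "Y n \<in> ann J a" for n
    using assms av_0 av_Suc
    by (cases n) (simp_all add: Y_def ann_def compose.diff_right BH_diff BH_compose
        flip: blinfun_compose_assoc)
  moreover have "pow_conv b Y k = v k" for k
    by (induction k) (simp_all add: Y_def pow_conv_Suc)
  ultimately show "\<exists>Y. (\<forall>n. Y n \<in> ann J a) \<and> v = pow_conv b Y"
    by (intro exI[of _ Y]) (simp add: fun_eq_iff)
next
  assume "\<exists>Y. (\<forall>n. Y n \<in> ann J a) \<and> v = pow_conv b Y"
  then obtain Y where "\<forall>n. Y n \<in> ann J a" and v: "v = pow_conv b Y" by blast
  hence Y: "a o\<^sub>L Y n = 0" for n by (simp add: ann_def)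
  show "shift_sub a v = (\<lambda>_. 0)"
  proof
    show "shift_sub a v k = 0" for k
      using assms(1) Y
      by (cases k) (simp_all add: v pow_conv_Suc compose.add_right flip: blinfun_compose_assoc)
  qed
qed

lemma shift_sub_eq_minus_e0_iff:
  assumes "a o\<^sub>L b = id_blinfun" "b \<in> BH J" "\<And>k. u k \<in> BH J"
  shows "shift_sub a u = (\<lambda>k. - e0 k)
    \<longleftrightarrow> (\<exists>Y. (\<forall>n. Y n \<in> ann J a) \<and> u = (\<lambda>k. bpow b (Suc k) + pow_conv b Y k))"
proof -
  let ?v = "\<lambda>k. u k - bpow b (Suc k)"
  have "shift_sub a u = (\<lambda>k. - e0 k) \<longleftrightarrow> shift_sub a ?v = (\<lambda>_. 0)"
    by (simp add: shift_sub_diff shift_sub_bpow[OF assms(1)] fun_eq_iff eq_neg_iff_add_eq_0)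
  also have "\<dots> \<longleftrightarrow> (\<exists>Y. (\<forall>n. Y n \<in> ann J a) \<and> ?v = pow_conv b Y)"
    using assms by (intro shift_sub_eq_0_iff) (auto intro: BH_diff bpow_BH)
  also have "\<dots> \<longleftrightarrow> (\<exists>Y. (\<forall>n. Y n \<in> ann J a) \<and> u = (\<lambda>k. bpow b (Suc k) + pow_conv b Y k))"
    by (simp add: fun_eq_iff algebra_simps)
  finally show ?thesis .
qed

lemma Wset_iff:
  assumes B: "\<forall>T\<in>BH J. rinv J T \<longrightarrow> B T \<in> BH J \<and> T o\<^sub>L B T = id_blinfun"
    and "a \<in> BH J" "rinv J a"
  shows "a \<in> Wset J B \<longleftrightarrow> (\<exists>v\<in>l2 J. v \<noteq> (\<lambda>_. 0) \<and> shift_sub a v = (\<lambda>_. 0))"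
proof -
  have b: "a o\<^sub>L B a = id_blinfun" "B a \<in> BH J" using B assms(2,3) by blast+
  have "a \<in> Wset J B \<longleftrightarrow> (\<exists>Y. (\<forall>n. Y n \<in> ann J a) \<and> Y \<noteq> (\<lambda>_. 0) \<and> pow_conv (B a) Y \<in> l2 J)"
    using assms(2,3) by (simp add: Wset_def pow_conv_def[abs_def])
  also have "\<dots> \<longleftrightarrow> (\<exists>v\<in>l2 J. v \<noteq> (\<lambda>_. 0) \<and> shift_sub a v = (\<lambda>_. 0))"
  proof
    assume "\<exists>Y. (\<forall>n. Y n \<in> ann J a) \<and> Y \<noteq> (\<lambda>_. 0) \<and> pow_conv (B a) Y \<in> l2 J"
    then obtain Y where Y: "\<forall>n. Y n \<in> ann J a" and "Y \<noteq> (\<lambda>_. 0)" and v: "pow_conv (B a) Y \<in> l2 J"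
      by blast
    have "shift_sub a (pow_conv (B a) Y) = (\<lambda>_. 0)"
      using Y by (subst shift_sub_eq_0_iff[where v="pow_conv (B a) Y", OF b l2_BH[OF v]]) (intro exI[of _ Y] conjI refl)
    moreover have "pow_conv (B a) Y \<noteq> (\<lambda>_. 0)"
      using \<open>Y \<noteq> (\<lambda>_. 0)\<close> pow_conv_eq_0_iff by blast
    ultimately show "\<exists>v\<in>l2 J. v \<noteq> (\<lambda>_. 0) \<and> shift_sub a v = (\<lambda>_. 0)"
      using v by blast
  next
    assume "\<exists>v\<in>l2 J. v \<noteq> (\<lambda>_. 0) \<and> shift_sub a v = (\<lambda>_. 0)"
    then obtain v where v: "v \<in> l2 J" and "v \<noteq> (\<lambda>_. 0)" "shift_sub a v = (\<lambda>_. 0)" by blast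
    from shift_sub_eq_0_iff[where v=v, OF b l2_BH[OF v], THEN iffD1, OF this(3)]
    obtain Y where Y: "\<forall>n. Y n \<in> ann J a" and v_eq: "v = pow_conv (B a) Y" by blast
    from v_eq \<open>v \<noteq> (\<lambda>_. 0)\<close> have "Y \<noteq> (\<lambda>_. 0)"
      by (simp add: pow_conv_eq_0_iff)
    with Y v[unfolded v_eq]
    show "\<exists>Y. (\<forall>n. Y n \<in> ann J a) \<and> Y \<noteq> (\<lambda>_. 0) \<and> pow_conv (B a) Y \<in> l2 J"
      by blast
  qed
  finally show ?thesis .
qed

lemma Zset_iff:
  assumes B: "\<forall>T\<in>BH J. rinv J T \<longrightarrow> B T \<in> BH J \<and> T o\<^sub>L B T = id_blinfun"
    and "a \<in> BH J" "rinv J a"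
  shows "a \<in> Zset J B \<longleftrightarrow> \<not> (\<exists>u\<in>l2 J. shift_sub a u = (\<lambda>k. - e0 k))"
proof -
  have b: "a o\<^sub>L B a = id_blinfun" "B a \<in> BH J" using B assms(2,3) by blast+
  have "a \<in> Zset J B \<longleftrightarrow>
      \<not> (\<exists>Y. (\<forall>n. Y n \<in> ann J a) \<and> (\<lambda>k. bpow (B a) (Suc k) + pow_conv (B a) Y k) \<in> l2 J)"
    using assms(2,3) by (simp add: Zset_def pow_conv_def)
  also have "(\<exists>Y. (\<forall>n. Y n \<in> ann J a) \<and> (\<lambda>k. bpow (B a) (Suc k) + pow_conv (B a) Y k) \<in> l2 J)
      \<longleftrightarrow> (\<exists>u\<in>l2 J. shift_sub a u = (\<lambda>k. - e0 k))"
  proof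
    assume "\<exists>Y. (\<forall>n. Y n \<in> ann J a) \<and> (\<lambda>k. bpow (B a) (Suc k) + pow_conv (B a) Y k) \<in> l2 J"
    then obtain Y where Y: "\<forall>n. Y n \<in> ann J a"
      and u: "(\<lambda>k. bpow (B a) (Suc k) + pow_conv (B a) Y k) \<in> l2 J" by blast
    have "shift_sub a (\<lambda>k. bpow (B a) (Suc k) + pow_conv (B a) Y k) = (\<lambda>k. - e0 k)"
      using Y by (subst shift_sub_eq_minus_e0_iff[OF b l2_BH[OF u]]) (intro exI[of _ Y] conjI refl)
    with u show "\<exists>u\<in>l2 J. shift_sub a u = (\<lambda>k. - e0 k)" by blast
  next
    assume "\<exists>u\<in>l2 J. shift_sub a u = (\<lambda>k. - e0 k)"
    then obtain u where u: "u \<in> l2 J" and "shift_sub a u = (\<lambda>k. - e0 k)" by blast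
    from shift_sub_eq_minus_e0_iff[where u=u, OF b l2_BH[OF u], THEN iffD1, OF this(2)]
    obtain Y where "\<forall>n. Y n \<in> ann J a" "u = (\<lambda>k. bpow (B a) (Suc k) + pow_conv (B a) Y k)"
      by blast
    with u show "\<exists>Y. (\<forall>n. Y n \<in> ann J a) \<and> (\<lambda>k. bpow (B a) (Suc k) + pow_conv (B a) Y k) \<in> l2 J"
      by auto
  qed
  finally show ?thesis .
qed

lemma rinv_if_shift_sub_eq_minus_e0:
  assumes "u \<in> l2 J" "shift_sub a u = (\<lambda>k. - e0 k)"
  shows "rinv J a"
proof -
  have "a o\<^sub>L u 0 = id_blinfun" using fun_cong[OF assms(2), of 0] by simp
  with l2_BH[OF assms(1)] show ?thesis unfolding rinv_def by blast
qed

section \<open>Inequalities for nonnegative series\<close>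

lemma norm_suminf_le_of_summable:
  fixes f :: "nat \<Rightarrow> 'a::real_normed_vector"
  assumes "summable f" "summable g" "\<And>n. norm (f n) \<le> g n"
  shows "norm (suminf f) \<le> suminf g"
proof (rule tendsto_le[OF trivial_limit_sequentially summable_LIMSEQ[OF assms(2)]])
  show "(\<lambda>n. norm (\<Sum>i<n. f i)) \<longlonglongrightarrow> norm (suminf f)"
    by (intro tendsto_intros summable_LIMSEQ assms(1))
  show "\<forall>\<^sub>F n in sequentially. norm (\<Sum>i<n. f i) \<le> (\<Sum>i<n. g i)"
    by (intro always_eventually allI order_trans[OF norm_sum] sum_mono assms(3))
qed

lemma weighted_Cauchy_Schwarz:
  fixes c f :: "'i \<Rightarrow> real"
  assumes "\<And>i. i \<in> I \<Longrightarrow> 0 \<le> c i"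
  shows "(\<Sum>i\<in>I. c i * f i)\<^sup>2 \<le> (\<Sum>i\<in>I. c i) * (\<Sum>i\<in>I. c i * (f i)\<^sup>2)"
proof -
  have "(\<Sum>i\<in>I. c i * f i) = (\<Sum>i\<in>I. sqrt (c i) * (sqrt (c i) * f i))"
    using assms by (intro sum.cong refl) (simp flip: mult.assoc)
  also have "(\<dots>)\<^sup>2 \<le> (\<Sum>i\<in>I. (sqrt (c i))\<^sup>2) * (\<Sum>i\<in>I. (sqrt (c i) * f i)\<^sup>2)"
    by (rule Cauchy_Schwarz_ineq_sum)
  also have "\<dots> = (\<Sum>i\<in>I. c i) * (\<Sum>i\<in>I. c i * (f i)\<^sup>2)"
    using assms by (simp add: power_mult_distrib)
  finally show ?thesis .
qed

lemma weighted_Cauchy_Schwarz_suminf: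
  fixes c f :: "nat \<Rightarrow> real"
  assumes "\<And>i. 0 \<le> c i" "summable c" "summable (\<lambda>i. c i * f i)" "summable (\<lambda>i. c i * (f i)\<^sup>2)"
  shows "(\<Sum>i. c i * f i)\<^sup>2 \<le> (\<Sum>i. c i) * (\<Sum>i. c i * (f i)\<^sup>2)"
proof (rule LIMSEQ_le)
  show "(\<lambda>n. (\<Sum>i<n. c i * f i)\<^sup>2) \<longlonglongrightarrow> (\<Sum>i. c i * f i)\<^sup>2"
    by (intro tendsto_intros summable_LIMSEQ assms(3))
  show "(\<lambda>n. (\<Sum>i<n. c i) * (\<Sum>i<n. c i * (f i)\<^sup>2)) \<longlonglongrightarrow> (\<Sum>i. c i) * (\<Sum>i. c i * (f i)\<^sup>2)"
    by (intro tendsto_intros summable_LIMSEQ assms(2,4))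
  show "\<exists>N. \<forall>n\<ge>N. (\<Sum>i<n. c i * f i)\<^sup>2 \<le> (\<Sum>i<n. c i) * (\<Sum>i<n. c i * (f i)\<^sup>2)"
    using assms(1) by (intro exI allI impI weighted_Cauchy_Schwarz) auto
qed

lemma mult_divide_add_one_le:
  fixes x e :: real
  assumes "0 \<le> x" "0 \<le> e"
  shows "x * (e / (x + 1)) \<le> e"
  using assms by (simp add: field_simps)

definition tail_sum :: "(nat \<Rightarrow> real) \<Rightarrow> nat \<Rightarrow> real" where
  "tail_sum c r = (\<Sum>i. c (i + r))"

context
  fixes c :: "nat \<Rightarrow> real"
  assumes nonneg: "\<And>i. 0 \<le> c i" and summable: "summable c"
begin

lemma tail_sum_eq: "tail_sum c r = suminf c - (\<Sum>i<r. c i)"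
  unfolding tail_sum_def by (rule suminf_minus_initial_segment[OF summable])

lemma tail_sum_nonneg: "0 \<le> tail_sum c r"
  unfolding tail_sum_def using nonneg summable
  by (intro suminf_nonneg summable_ignore_initial_segment) auto

lemma tail_sum_le_suminf: "tail_sum c r \<le> suminf c"
  using tail_sum_eq[of r] nonneg by (simp add: sum_nonneg)

lemma tail_sum_antimono: "r \<le> r' \<Longrightarrow> tail_sum c r' \<le> tail_sum c r"
  using sum_mono2[of "{..<r'}" "{..<r}" c] nonneg by (simp add: tail_sum_eq)

lemma tail_sum_eventually_le:
  assumes "0 < e"
  obtains R where "\<And>r. R \<le> r \<Longrightarrow> tail_sum c r \<le> e"
proof -
  have "(\<lambda>r. suminf c - (\<Sum>i<r. c i)) \<longlonglongrightarrow> suminf c - suminf c"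
    by (intro tendsto_intros summable_LIMSEQ summable)
  hence "tail_sum c \<longlonglongrightarrow> 0" by (simp add: tail_sum_eq[abs_def])
  with assms obtain R where "\<forall>r\<ge>R. norm (tail_sum c r - 0) < e"
    unfolding LIMSEQ_def dist_norm by blast
  thus ?thesis using that by force
qed

lemma sum_le_tail_sum:
  assumes "finite K" "inj_on f K" "\<And>k. k \<in> K \<Longrightarrow> r \<le> f k"
  shows "(\<Sum>k\<in>K. c (f k)) \<le> tail_sum c r"
proof -
  have "inj_on (\<lambda>k. f k - r) K"
    using assms(2,3) by (auto simp: inj_on_def) (metis le_add_diff_inverse2)
  hence "(\<Sum>k\<in>K. c (f k)) = (\<Sum>i\<in>(\<lambda>k. f k - r) ` K. c (i + r))"
    using assms(3) by (simp add: sum.reindex)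
  also have "\<dots> \<le> tail_sum c r"
    unfolding tail_sum_def using assms(1) nonneg
    by (intro sum_le_suminf summable_ignore_initial_segment summable) auto
  finally show ?thesis .
qed

lemma sum_convolution_le:
  assumes "\<And>i. 0 \<le> a i"
  shows "(\<Sum>n\<in>{m..<p}. \<Sum>k\<le>n. c (n - k) * a k) \<le> (\<Sum>k<p. a k * tail_sum c (m - k))"
proof -
  have "(\<Sum>n\<in>{m..<p}. \<Sum>k\<le>n. c (n - k) * a k)
      = (\<Sum>n\<in>{m..<p}. \<Sum>k<p. if k \<le> n then c (n - k) * a k else 0)"
  proof (rule sum.cong[OF refl])
    fix n assume "n \<in> {m..<p}"
    hence "{k\<in>{..<p}. k \<le> n} = {..n}" by auto
    thus "(\<Sum>k\<le>n. c (n - k) * a k) = (\<Sum>k<p. if k \<le> n then c (n - k) * a k else 0)"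
      by (simp flip: sum.inter_filter)
  qed
  also have "\<dots> = (\<Sum>k<p. a k * (\<Sum>n\<in>{n\<in>{m..<p}. k \<le> n}. c (n - k)))"
    by (subst sum.swap) (simp add: sum_distrib_left mult.commute flip: sum.inter_filter)
  also have "\<dots> \<le> (\<Sum>k<p. a k * tail_sum c (m - k))"
    by (intro sum_mono mult_left_mono assms sum_le_tail_sum) (auto simp: inj_on_def)
  finally show ?thesis .
qed

lemma sum_tail_sum_split:
  assumes "\<And>i. 0 \<le> a i"
  shows "(\<Sum>k<p. a k * tail_sum c (m - k))
    \<le> tail_sum c (m - M) * (\<Sum>k<M. a k) + suminf c * (\<Sum>k\<in>{M..<p}. a k)"
proof -
  have "(\<Sum>k<p. a k * tail_sum c (m - k))
      \<le> (\<Sum>k<p. if k < M then tail_sum c (m - M) * a k else suminf c * a k)"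
  proof (intro sum_mono)
    fix k
    show "a k * tail_sum c (m - k) \<le> (if k < M then tail_sum c (m - M) * a k else suminf c * a k)"
    proof (cases "k < M")
      case True
      hence "tail_sum c (m - k) \<le> tail_sum c (m - M)" by (intro tail_sum_antimono) simp
      from mult_left_mono[OF this assms[of k]] True show ?thesis by (simp add: mult.commute)
    next
      case False
      thus ?thesis using mult_left_mono[OF tail_sum_le_suminf assms[of k]] by (simp add: mult.commute)
    qed
  qed
  also have "\<dots> = tail_sum c (m - M) * (\<Sum>k\<in>{..<p} \<inter> {..<M}. a k)
      + suminf c * (\<Sum>k\<in>{..<p} \<inter> - {..<M}. a k)"
    by (simp add: sum.If_cases sum_distrib_left lessThan_def)
  also have "\<dots> \<le> tail_sum c (m - M) * (\<Sum>k<M. a k) + suminf c * (\<Sum>k\<in>{M..<p}. a k)"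
  proof -
    have "{..<p} \<inter> - {..<M} = {M..<p}" by auto
    moreover have "(\<Sum>k\<in>{..<p} \<inter> {..<M}. a k) \<le> (\<Sum>k<M. a k)"
      using assms by (intro sum_mono2) auto
    ultimately show ?thesis using tail_sum_nonneg by (simp add: mult_left_mono)
  qed
  finally show ?thesis .
qed

end

section \<open>Summability of the norms of powers\<close>

lemma sum_div_blocks:
  fixes g :: "nat \<Rightarrow> real"
  shows "(\<Sum>k<p * Q. g (k div p)) = real p * (\<Sum>q<Q. g q)"
proof (induction Q)
  case (Suc Q)
  have "(\<Sum>k<p * Suc Q. g (k div p))
      = (\<Sum>k\<in>{0..<p * Q}. g (k div p)) + (\<Sum>k\<in>{p * Q..<p * Q + p}. g (k div p))"
    by (simp add: sum.atLeastLessThan_concat lessThan_atLeast0 algebra_simps)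
  also have "(\<Sum>k\<in>{p * Q..<p * Q + p}. g (k div p)) = (\<Sum>k\<in>{p * Q..<p * Q + p}. g Q)"
  proof (intro sum.cong refl)
    fix k assume "k \<in> {p * Q..<p * Q + p}"
    hence "k div p = Q" by (intro div_nat_eqI) auto
    thus "g (k div p) = g Q" by simp
  qed
  finally show ?case using Suc.IH by (simp add: lessThan_atLeast0 algebra_simps)
qed simp

lemma summable_half_power_div:
  assumes "0 < p"
  shows "summable (\<lambda>n. (1/2::real) ^ (n div p))"
proof (rule bounded_imp_summable)
  fix n
  have "(\<Sum>k\<le>n. (1/2::real) ^ (k div p)) \<le> (\<Sum>k<p * Suc n. (1/2::real) ^ (k div p))"
  proof (intro sum_mono2)
    have "1 * Suc n \<le> p * Suc n" using assms by (intro mult_le_mono1) simp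
    thus "{..n} \<subseteq> {..<p * Suc n}" by auto
  qed auto
  also have "\<dots> = real p * (\<Sum>q<Suc n. (1/2::real) ^ q)" by (rule sum_div_blocks)
  also have "\<dots> \<le> real p * 2" by (intro mult_left_mono) (simp_all add: sum_gp_strict)
  finally show "(\<Sum>k\<le>n. (1/2::real) ^ (k div p)) \<le> real p * 2" .
qed simp

lemma norm_bpow_mult_le:
  fixes \<beta> :: "'a::real_normed_vector \<Rightarrow>\<^sub>L 'a"
  assumes "norm (bpow \<beta> p) \<le> 1/2"
  shows "norm (bpow \<beta> (p * q)) \<le> (1/2) ^ q"
proof (induction q)
  case (Suc q)
  have "norm (bpow \<beta> (p * Suc q)) \<le> norm (bpow \<beta> p) * norm (bpow \<beta> (p * q))"
    by (simp add: bpow_add norm_blinfun_compose)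
  also have "\<dots> \<le> 1/2 * (1/2) ^ q" using assms Suc.IH by (intro mult_mono) auto
  finally show ?case by simp
qed (simp add: norm_blinfun_id_le)

lemma summable_norm_bpow:
  fixes \<beta> :: "'a::real_normed_vector \<Rightarrow>\<^sub>L 'a"
  assumes "norm (bpow \<beta> p) \<le> 1/2" "0 < p"
  shows "summable (\<lambda>n. norm (bpow \<beta> n))"
proof -
  define K where "K = (\<Sum>r<p. norm (bpow \<beta> r))"
  have "norm (bpow \<beta> n) \<le> K * (1/2) ^ (n div p)" for n
  proof -
    have "norm (bpow \<beta> n) \<le> norm (bpow \<beta> (p * (n div p))) * norm (bpow \<beta> (n mod p))"
      by (metis bpow_add div_mult_mod_eq mult.commute norm_blinfun_compose)
    also have "\<dots> \<le> (1/2) ^ (n div p) * K"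
      using assms by (intro mult_mono norm_bpow_mult_le) (auto simp: K_def intro: member_le_sum)
    finally show ?thesis by (simp add: mult.commute)
  qed
  thus ?thesis
    by (intro summable_comparison_test'[OF summable_mult[OF summable_half_power_div[OF assms(2)]]])
      simp
qed

lemma norm_bpow_Suc_tendsto_0:
  fixes \<beta> :: "'h::{real_inner,complete_space} \<Rightarrow>\<^sub>L 'h"
  assumes "(\<lambda>k. bpow \<beta> (Suc k)) \<in> l2 J"
  shows "(\<lambda>k. norm (bpow \<beta> (Suc k))) \<longlonglongrightarrow> 0"
proof (rule real_tendsto_sandwich[OF _ _ tendsto_const])
  let ?P = "\<lambda>k. bpow \<beta> (Suc k)"
  have "(\<lambda>k. adj (?P k) o\<^sub>L ?P k) \<longlonglongrightarrow> 0"
    using assms by (simp add: l2_def summable_LIMSEQ_zero)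
  thus "(\<lambda>k. sqrt (norm (adj (?P k) o\<^sub>L ?P k))) \<longlonglongrightarrow> 0"
    using tendsto_real_sqrt[OF tendsto_norm_zero] by fastforce
  show "\<forall>\<^sub>F n in sequentially. norm (?P n) \<le> sqrt (norm (adj (?P n) o\<^sub>L ?P n))"
    by (intro always_eventually allI real_le_rsqrt norm_sq_le_norm_adj_compose)
qed simp

lemma summable_norm_bpow_Suc_if_l2:
  fixes \<beta> :: "'h::{real_inner,complete_space} \<Rightarrow>\<^sub>L 'h"
  assumes "(\<lambda>k. bpow \<beta> (Suc k)) \<in> l2 J"
  shows "summable (\<lambda>j. norm (bpow \<beta> (Suc j)))"
proof -
  have "\<forall>\<^sub>F N in sequentially. norm (bpow \<beta> (Suc N)) < 1/2"
    using order_tendstoD(2)[OF norm_bpow_Suc_tendsto_0[OF assms], of "1/2"] by simp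
  then obtain N where "norm (bpow \<beta> (Suc N)) < 1/2"
    using eventually_sequentially by auto
  hence "summable (\<lambda>n. norm (bpow \<beta> n))" by (intro summable_norm_bpow[of _ "Suc N"]) auto
  thus ?thesis by (subst summable_Suc_iff)
qed

section \<open>The inverse of S - aI for invertible a\<close>

definition shift_sub_inv :: "('h::real_normed_vector \<Rightarrow>\<^sub>L 'h) \<Rightarrow> (nat \<Rightarrow> ('h \<Rightarrow>\<^sub>L 'h)) \<Rightarrow> nat \<Rightarrow> ('h \<Rightarrow>\<^sub>L 'h)" where
  "shift_sub_inv b y n = - (b o\<^sub>L pow_conv b y n)"

definition shift_sub_inv_adj :: "('h::{real_inner,complete_space} \<Rightarrow>\<^sub>L 'h) \<Rightarrow> (nat \<Rightarrow> ('h \<Rightarrow>\<^sub>L 'h)) \<Rightarrow> nat \<Rightarrow> ('h \<Rightarrow>\<^sub>L 'h)" where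
  "shift_sub_inv_adj b y k = - (\<Sum>j. adj (bpow b (Suc j)) o\<^sub>L y (k + j))"

lemma shift_sub_inv_eq: "shift_sub_inv b y n = - (\<Sum>k\<le>n. bpow b (Suc (n - k)) o\<^sub>L y k)"
  by (simp add: shift_sub_inv_def pow_conv_def compose.sum_right bpow_Suc blinfun_compose_assoc)

lemma shift_sub_shift_sub_inv:
  assumes "a o\<^sub>L b = id_blinfun"
  shows "shift_sub a (shift_sub_inv b y) = y"
proof
  have a_inv: "a o\<^sub>L shift_sub_inv b y n = - pow_conv b y n" for n
    using assms by (simp add: shift_sub_inv_def compose.minus_right flip: blinfun_compose_assoc)
  show "shift_sub a (shift_sub_inv b y) n = y n" for n
  proof (cases n)
    case 0
    thus ?thesis by (simp only: shift_sub_0 a_inv) simp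
  next
    case (Suc k)
    thus ?thesis by (simp only: shift_sub_Suc a_inv) (simp add: shift_sub_inv_def pow_conv_Suc)
  qed
qed

lemma shift_sub_injective:
  assumes "b o\<^sub>L a = id_blinfun" and eq: "shift_sub a z = shift_sub a w"
  shows "z = w"
proof
  have cancel: "u = v" if "a o\<^sub>L u = a o\<^sub>L v" for u v
    using arg_cong[OF that, of "\<lambda>x. b o\<^sub>L x"] by (simp add: assms(1) flip: blinfun_compose_assoc)
  show "z k = w k" for k
  proof (induction k)
    case 0
    have "a o\<^sub>L z 0 = a o\<^sub>L w 0" using fun_cong[OF eq, of 0] by simp
    thus ?case by (rule cancel)
  next
    case (Suc k)
    have "a o\<^sub>L z (Suc k) = a o\<^sub>L w (Suc k)" using fun_cong[OF eq, of "Suc k"] Suc.IH by simp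
    thus ?case by (rule cancel)
  qed
qed

lemma shift_sub_inv_BH:
  assumes "b \<in> BH J" "y \<in> l2 J"
  shows "shift_sub_inv b y n \<in> BH J"
  unfolding shift_sub_inv_eq using assms
  by (intro BH_minus BH_sum BH_compose[OF bpow_BH l2_BH]) auto

lemma norm_shift_sub_inv_apply_le:
  "norm (shift_sub_inv b y n h) \<le> (\<Sum>k\<le>n. norm (bpow b (Suc (n - k))) * norm (y k h))"
proof -
  have "norm (shift_sub_inv b y n h) = norm (\<Sum>k\<le>n. bpow b (Suc (n - k)) (y k h))"
    by (simp add: shift_sub_inv_eq blinfun.minus_left blinfun.sum_left)
  also have "\<dots> \<le> (\<Sum>k\<le>n. norm (bpow b (Suc (n - k))) * norm (y k h))"
    by (intro order_trans[OF norm_sum] sum_mono norm_blinfun)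
  finally show ?thesis .
qed

definition pow_norms :: "('a::real_normed_vector \<Rightarrow>\<^sub>L 'a) \<Rightarrow> nat \<Rightarrow> real" where
  "pow_norms b j = norm (bpow b (Suc j))"

lemma pow_norms_nonneg [simp]: "0 \<le> pow_norms b j"
  by (simp add: pow_norms_def)

context
  fixes b :: "'h::{real_inner,complete_space} \<Rightarrow>\<^sub>L 'h"
  assumes summable_pow: "summable (pow_norms b)"
begin

lemma sum_sq_norm_shift_sub_inv_le:
  "(\<Sum>n\<in>{m..<p}. (norm (shift_sub_inv b y n h))\<^sup>2)
    \<le> suminf (pow_norms b) * (\<Sum>k<p. (norm (y k h))\<^sup>2 * tail_sum (pow_norms b) (m - k))"
proof -
  have "(norm (shift_sub_inv b y n h))\<^sup>2 \<le> suminf (pow_norms b) * (\<Sum>k\<le>n. pow_norms b (n - k) * (norm (y k h))\<^sup>2)" for n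
  proof -
    have "(norm (shift_sub_inv b y n h))\<^sup>2 \<le> (\<Sum>k\<le>n. pow_norms b (n - k) * norm (y k h))\<^sup>2"
      using norm_shift_sub_inv_apply_le[of b y n h] by (intro power_mono) (auto simp: pow_norms_def)
    also have "\<dots> \<le> (\<Sum>k\<le>n. pow_norms b (n - k)) * (\<Sum>k\<le>n. pow_norms b (n - k) * (norm (y k h))\<^sup>2)"
      by (rule weighted_Cauchy_Schwarz) (simp add: pow_norms_def)
    also have "\<dots> \<le> suminf (pow_norms b) * (\<Sum>k\<le>n. pow_norms b (n - k) * (norm (y k h))\<^sup>2)"
    proof (rule mult_right_mono)
      have "(\<Sum>k\<le>n. pow_norms b (n - k)) \<le> tail_sum (pow_norms b) 0"
        using summable_pow by (intro sum_le_tail_sum) (auto simp: inj_on_def)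
      thus "(\<Sum>k\<le>n. pow_norms b (n - k)) \<le> suminf (pow_norms b)" by (simp add: tail_sum_def)
    qed (simp add: sum_nonneg)
    finally show ?thesis .
  qed
  hence "(\<Sum>n\<in>{m..<p}. (norm (shift_sub_inv b y n h))\<^sup>2)
      \<le> suminf (pow_norms b) * (\<Sum>n\<in>{m..<p}. \<Sum>k\<le>n. pow_norms b (n - k) * (norm (y k h))\<^sup>2)"
    by (simp add: sum_distrib_left sum_mono)
  also have "\<dots> \<le> suminf (pow_norms b) * (\<Sum>k<p. (norm (y k h))\<^sup>2 * tail_sum (pow_norms b) (m - k))"
    using summable_pow by (intro mult_left_mono sum_convolution_le suminf_nonneg) auto
  finally show ?thesis .
qed

lemma sq_sums_bounded_shift_sub_inv:
  assumes "y \<in> l2 J"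
  shows "sq_sums_bounded (shift_sub_inv b y) ((suminf (pow_norms b))\<^sup>2 * (hnorm y)\<^sup>2)"
  unfolding sq_sums_bounded_def
proof (intro allI)
  fix p h
  let ?C = "suminf (pow_norms b)"
  have "(\<Sum>n<p. (norm (shift_sub_inv b y n h))\<^sup>2)
      \<le> ?C * (\<Sum>k<p. (norm (y k h))\<^sup>2 * tail_sum (pow_norms b) (0 - k))"
    using sum_sq_norm_shift_sub_inv_le[where m=0 and p=p and y=y and h=h]
    by (simp add: atLeast0LessThan)
  also have "\<dots> \<le> ?C * (\<Sum>k<p. (norm (y k h))\<^sup>2 * ?C)"
    using summable_pow
    by (intro mult_left_mono sum_mono suminf_nonneg tail_sum_le_suminf) auto
  also have "\<dots> = ?C\<^sup>2 * (\<Sum>k<p. (norm (y k h))\<^sup>2)"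
    by (simp add: sum_distrib_left power2_eq_square mult_ac)
  also have "\<dots> \<le> ?C\<^sup>2 * ((hnorm y)\<^sup>2 * (norm h)\<^sup>2)"
    using l2_sq_sums_bounded[OF assms] unfolding sq_sums_bounded_def by (intro mult_left_mono) auto
  finally show "(\<Sum>n<p. (norm (shift_sub_inv b y n h))\<^sup>2) \<le> ?C\<^sup>2 * (hnorm y)\<^sup>2 * (norm h)\<^sup>2"
    by (simp add: mult.assoc)
qed

lemma uniform_sq_tails_shift_sub_inv:
  assumes "y \<in> l2 J"
  shows "uniform_sq_tails (shift_sub_inv b y)"
  unfolding uniform_sq_tails_def
proof (intro allI impI)
  fix e :: real assume "0 < e"
  define C where "C = suminf (pow_norms b)"
  define H where "H = (hnorm y)\<^sup>2"
  have "0 \<le> C" unfolding C_def using summable_pow by (intro suminf_nonneg) auto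
  have "0 \<le> H" by (simp add: H_def)
  \<comment> \<open>the early terms of y meet only far tails of the powers, the late ones have small tails\<close>
  define e1 where "e1 = (e / 2) / (C * C + 1)"
  define e2 where "e2 = (e / 2) / (C * H + 1)"
  have "0 < e1" "0 < e2"
    using \<open>0 < e\<close> \<open>0 \<le> C\<close> \<open>0 \<le> H\<close> by (simp_all add: e1_def e2_def add_nonneg_pos)
  obtain M where M: "\<And>m n h. M \<le> m \<Longrightarrow> (\<Sum>k\<in>{m..<n}. (norm (y k h))\<^sup>2) \<le> e1 * (norm h)\<^sup>2"
    using uniform_sq_tailsD[OF l2_uniform_sq_tails[OF assms] \<open>0 < e1\<close>] by blast
  obtain R where R: "\<And>r. R \<le> r \<Longrightarrow> tail_sum (pow_norms b) r \<le> e2"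
    using tail_sum_eventually_le[OF _ summable_pow \<open>0 < e2\<close>] by auto
  have "(\<Sum>n\<in>{m..<p}. (norm (shift_sub_inv b y n h))\<^sup>2) \<le> e * (norm h)\<^sup>2"
    if "M + R \<le> m" for m p h
  proof -
    let ?a = "\<lambda>k. (norm (y k h))\<^sup>2"
    have "(\<Sum>n\<in>{m..<p}. (norm (shift_sub_inv b y n h))\<^sup>2)
        \<le> C * (\<Sum>k<p. ?a k * tail_sum (pow_norms b) (m - k))"
      unfolding C_def by (rule sum_sq_norm_shift_sub_inv_le)
    also have "\<dots> \<le> C * (tail_sum (pow_norms b) (m - M) * (\<Sum>k<M. ?a k) + C * (\<Sum>k\<in>{M..<p}. ?a k))"
      unfolding C_def using summable_pow
      by (intro mult_left_mono sum_tail_sum_split suminf_nonneg) auto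
    also have "\<dots> \<le> C * (e2 * (H * (norm h)\<^sup>2) + C * (e1 * (norm h)\<^sup>2))"
    proof (intro mult_left_mono add_mono mult_mono \<open>0 \<le> C\<close>)
      show "tail_sum (pow_norms b) (m - M) \<le> e2" using that by (intro R) auto
      show "(\<Sum>k<M. ?a k) \<le> H * (norm h)\<^sup>2"
        using l2_sq_sums_bounded[OF assms] unfolding sq_sums_bounded_def H_def by blast
      show "(\<Sum>k\<in>{M..<p}. ?a k) \<le> e1 * (norm h)\<^sup>2" by (rule M) simp
    qed (use \<open>0 < e2\<close> in \<open>auto intro: sum_nonneg\<close>)
    also have "\<dots> = ((C * H) * e2 + (C * C) * e1) * (norm h)\<^sup>2" by (simp add: algebra_simps)
    also have "\<dots> \<le> (e/2 + e/2) * (norm h)\<^sup>2"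
      using \<open>0 \<le> C\<close> \<open>0 \<le> H\<close> \<open>0 < e\<close> unfolding e1_def e2_def
      by (intro mult_right_mono add_mono mult_divide_add_one_le) simp_all
    finally show ?thesis by simp
  qed
  thus "\<exists>N. \<forall>m\<ge>N. \<forall>n h. (\<Sum>k\<in>{m..<n}. (norm (shift_sub_inv b y k h))\<^sup>2) \<le> e * (norm h)\<^sup>2"
    by blast
qed

lemma l2_shift_sub_inv:
  assumes "b \<in> BH J" "y \<in> l2 J"
  shows "shift_sub_inv b y \<in> l2 J"
  using uniform_sq_tails_shift_sub_inv[OF assms(2)] by (simp add: l2_iff shift_sub_inv_BH[OF assms])

lemma summable_shift_sub_inv_adj_terms:
  assumes "y \<in> l2 J"
  shows "summable (\<lambda>j. adj (bpow b (Suc j)) o\<^sub>L y (k + j))"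
proof (rule summable_blinfun_comparison[OF summable_mult2[OF summable_pow, of "hnorm y"]])
  fix j
  have "norm (adj (bpow b (Suc j)) o\<^sub>L y (k + j)) \<le> norm (bpow b (Suc j)) * norm (y (k + j))"
    using norm_blinfun_compose by (metis norm_adj)
  also have "\<dots> \<le> pow_norms b j * hnorm y"
    unfolding pow_norms_def by (intro mult_left_mono norm_le_hnorm[OF assms] norm_ge_zero)
  finally show "norm (adj (bpow b (Suc j)) o\<^sub>L y (k + j)) \<le> pow_norms b j * hnorm y" .
qed

lemma shift_sub_inv_adj_BH:
  assumes "cstruct J" "b \<in> BH J" "y \<in> l2 J"
  shows "shift_sub_inv_adj b y k \<in> BH J"
proof -
  have "adj (bpow b (Suc j)) o\<^sub>L y (k + j) \<in> BH J" for j
    by (rule BH_compose[OF BH_adj[OF assms(1) bpow_BH[OF assms(2)]] l2_BH[OF assms(3)]])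
  thus ?thesis unfolding shift_sub_inv_adj_def
    by (intro BH_minus BH_suminf summable_shift_sub_inv_adj_terms[OF assms(3)])
qed

lemma norm_shift_sub_inv_adj_apply_le:
  assumes "y \<in> l2 J"
  shows "norm (shift_sub_inv_adj b y k h) \<le> (\<Sum>j. pow_norms b j * norm (y (k + j) h))"
    and "summable (\<lambda>j. pow_norms b j * norm (y (k + j) h))"
    and "summable (\<lambda>j. pow_norms b j * (norm (y (k + j) h))\<^sup>2)"
proof -
  have y_bound: "norm (y n h) \<le> hnorm y * norm h" for n
    using norm_blinfun[of "y n" h] norm_le_hnorm[OF assms, of n]
    by (meson mult_right_mono norm_ge_zero order_trans)
  show s1: "summable (\<lambda>j. pow_norms b j * norm (y (k + j) h))"
    by (rule summable_comparison_test'[OF summable_mult2[OF summable_pow, of "hnorm y * norm h"]])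
      (auto intro!: mult_left_mono y_bound)
  show "summable (\<lambda>j. pow_norms b j * (norm (y (k + j) h))\<^sup>2)"
    by (rule summable_comparison_test'[OF summable_mult2[OF summable_pow, of "(hnorm y * norm h)\<^sup>2"]])
      (auto intro!: mult_left_mono power_mono y_bound)
  have terms: "summable (\<lambda>j. adj (bpow b (Suc j)) (y (k + j) h))"
    "shift_sub_inv_adj b y k h = - (\<Sum>j. adj (bpow b (Suc j)) (y (k + j) h))"
    using bounded_linear.summable[OF blinfun.bounded_linear_left summable_shift_sub_inv_adj_terms[OF assms]]
      bounded_linear.suminf[OF blinfun.bounded_linear_left summable_shift_sub_inv_adj_terms[OF assms]]
    by (simp_all add: shift_sub_inv_adj_def blinfun.minus_left)
  have "norm (adj (bpow b (Suc j)) (y (k + j) h)) \<le> pow_norms b j * norm (y (k + j) h)" for j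
    using norm_blinfun[of "adj (bpow b (Suc j))" "y (k + j) h"] by (simp add: pow_norms_def)
  with terms s1 show "norm (shift_sub_inv_adj b y k h) \<le> (\<Sum>j. pow_norms b j * norm (y (k + j) h))"
    by (simp add: norm_suminf_le_of_summable)
qed

lemma sum_sq_norm_shift_sub_inv_adj_le:
  assumes "y \<in> l2 J" and E: "\<And>j. (\<Sum>k\<in>{m..<p}. (norm (y (k + j) h))\<^sup>2) \<le> E"
  shows "(\<Sum>k\<in>{m..<p}. (norm (shift_sub_inv_adj b y k h))\<^sup>2) \<le> (suminf (pow_norms b))\<^sup>2 * E"
proof -
  let ?c = "pow_norms b" and ?C = "suminf (pow_norms b)"
  note bounds = norm_shift_sub_inv_adj_apply_le[OF assms(1)]
  have "(norm (shift_sub_inv_adj b y k h))\<^sup>2 \<le> ?C * (\<Sum>j. ?c j * (norm (y (k + j) h))\<^sup>2)" for k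
  proof -
    have "(norm (shift_sub_inv_adj b y k h))\<^sup>2 \<le> (\<Sum>j. ?c j * norm (y (k + j) h))\<^sup>2"
      using bounds(1) by (intro power_mono) auto
    also have "\<dots> \<le> ?C * (\<Sum>j. ?c j * (norm (y (k + j) h))\<^sup>2)"
      using bounds(2,3) summable_pow by (intro weighted_Cauchy_Schwarz_suminf) auto
    finally show ?thesis .
  qed
  hence "(\<Sum>k\<in>{m..<p}. (norm (shift_sub_inv_adj b y k h))\<^sup>2)
      \<le> ?C * (\<Sum>k\<in>{m..<p}. \<Sum>j. ?c j * (norm (y (k + j) h))\<^sup>2)"
    by (simp add: sum_distrib_left sum_mono)
  also have "(\<Sum>k\<in>{m..<p}. \<Sum>j. ?c j * (norm (y (k + j) h))\<^sup>2)
      = (\<Sum>j. \<Sum>k\<in>{m..<p}. ?c j * (norm (y (k + j) h))\<^sup>2)"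
    using bounds(3) by (rule suminf_sum[symmetric])
  also have "\<dots> \<le> (\<Sum>j. ?c j * E)"
  proof (rule suminf_le)
    show "(\<Sum>k\<in>{m..<p}. ?c j * (norm (y (k + j) h))\<^sup>2) \<le> ?c j * E" for j
      using E[of j] by (simp add: mult_left_mono flip: sum_distrib_left)
    show "summable (\<lambda>j. \<Sum>k\<in>{m..<p}. ?c j * (norm (y (k + j) h))\<^sup>2)"
      using bounds(3) by (rule summable_sum)
  qed (rule summable_mult2[OF summable_pow])
  also have "\<dots> = ?C * E" by (rule suminf_mult2[OF summable_pow, symmetric])
  finally show ?thesis
    using summable_pow by (simp add: mult_left_mono suminf_nonneg power2_eq_square mult.assoc)
qed

lemma l2_shift_sub_inv_adj:
  assumes "cstruct J" "b \<in> BH J" "y \<in> l2 J"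
  shows "shift_sub_inv_adj b y \<in> l2 J"
proof -
  have "uniform_sq_tails (shift_sub_inv_adj b y)"
    unfolding uniform_sq_tails_def
  proof (intro allI impI)
    fix e :: real assume "0 < e"
    define C where "C = suminf (pow_norms b)"
    define e' where "e' = e / (C\<^sup>2 + 1)"
    have "0 < e'" using \<open>0 < e\<close> by (simp add: e'_def add_nonneg_pos)
    then obtain N where N: "\<And>m n h. N \<le> m \<Longrightarrow> (\<Sum>k\<in>{m..<n}. (norm (y k h))\<^sup>2) \<le> e' * (norm h)\<^sup>2"
      using uniform_sq_tailsD[OF l2_uniform_sq_tails[OF assms(3)]] by blast
    have "(\<Sum>k\<in>{m..<p}. (norm (shift_sub_inv_adj b y k h))\<^sup>2) \<le> e * (norm h)\<^sup>2"
      if "N \<le> m" for m p h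
    proof -
      have "(\<Sum>k\<in>{m..<p}. (norm (y (k + j) h))\<^sup>2) \<le> e' * (norm h)\<^sup>2" for j
        using N[where m="m + j" and n="p + j" and h=h] that by (simp add: sum.shift_bounds_nat_ivl)
      from sum_sq_norm_shift_sub_inv_adj_le[OF assms(3) this]
      have "(\<Sum>k\<in>{m..<p}. (norm (shift_sub_inv_adj b y k h))\<^sup>2) \<le> C\<^sup>2 * e' * (norm h)\<^sup>2"
        by (simp add: C_def mult.assoc)
      also have "\<dots> \<le> e * (norm h)\<^sup>2"
        using \<open>0 < e\<close> unfolding e'_def by (intro mult_right_mono mult_divide_add_one_le) simp_all
      finally show ?thesis .
    qed
    thus "\<exists>N. \<forall>m\<ge>N. \<forall>n h. (\<Sum>k\<in>{m..<n}. (norm (shift_sub_inv_adj b y k h))\<^sup>2) \<le> e * (norm h)\<^sup>2"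
      by blast
  qed
  thus ?thesis using shift_sub_inv_adj_BH[OF assms] by (simp add: l2_iff)
qed

lemma shift_sub_adj_shift_sub_inv_adj:
  assumes "b o\<^sub>L a = id_blinfun" "y \<in> l2 J"
  shows "shift_sub_adj a (shift_sub_inv_adj b y) = y"
proof
  fix k
  define g where "g j = adj (bpow b j) o\<^sub>L y (k + j)" for j
  have g_Suc: "g (Suc j) = adj (bpow b (Suc j)) o\<^sub>L y (Suc k + j)" for j by (simp add: g_def)
  have "summable (\<lambda>j. g (Suc j))"
    unfolding g_Suc by (rule summable_shift_sub_inv_adj_terms[OF assms(2)])
  hence "summable g" by (simp only: summable_Suc_iff)
  have adj_a: "adj a o\<^sub>L adj (bpow b (Suc j)) = adj (bpow b j)" for j
    using assms(1) by (simp add: bpow_Suc' blinfun_compose_assoc flip: adj_compose)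
  have "adj a o\<^sub>L shift_sub_inv_adj b y k = - (\<Sum>j. adj a o\<^sub>L (adj (bpow b (Suc j)) o\<^sub>L y (k + j)))"
    unfolding shift_sub_inv_adj_def compose.minus_right
    by (simp add: bounded_linear.suminf[OF compose.bounded_linear_right
          summable_shift_sub_inv_adj_terms[OF assms(2)]])
  also have "(\<lambda>j. adj a o\<^sub>L (adj (bpow b (Suc j)) o\<^sub>L y (k + j))) = g"
    by (simp add: fun_eq_iff g_def adj_a flip: blinfun_compose_assoc)
  also have "suminf g = y k - shift_sub_inv_adj b y (Suc k)"
    using suminf_split_head[OF \<open>summable g\<close>] by (simp add: g_Suc shift_sub_inv_adj_def g_def)
  finally show "shift_sub_adj a (shift_sub_inv_adj b y) k = y k"
    by (simp add: shift_sub_adj_def)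
qed

lemma badj_shift_sub_inv:
  assumes "cstruct J" "a \<in> BH J" "b \<in> BH J" "a o\<^sub>L b = id_blinfun" "b o\<^sub>L a = id_blinfun"
  shows "badj J (shift_sub_inv b)"
  unfolding badj_def
proof (intro conjI ballI)
  show "shift_sub_inv b x \<in> l2 J" if "x \<in> l2 J" for x
    using assms(3) that by (rule l2_shift_sub_inv)
  show "shift_sub_inv b (\<lambda>k. x k + y k) = (\<lambda>k. shift_sub_inv b x k + shift_sub_inv b y k)" for x y
    by (simp add: fun_eq_iff shift_sub_inv_eq compose.add_right sum.distrib)
  show "shift_sub_inv b (\<lambda>k. x k o\<^sub>L c) = (\<lambda>k. shift_sub_inv b x k o\<^sub>L c)" for x c
    by (simp add: fun_eq_iff shift_sub_inv_eq compose.minus_left compose.sum_left blinfun_compose_assoc)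
  show "\<exists>C. \<forall>x\<in>l2 J. hnorm (shift_sub_inv b x) \<le> C * hnorm x"
  proof (intro exI ballI)
    fix x assume x: "x \<in> l2 J"
    have "0 \<le> suminf (pow_norms b)" using summable_pow by (intro suminf_nonneg) auto
    with hnorm_le_sqrt[OF l2_shift_sub_inv[OF assms(3) x] sq_sums_bounded_shift_sub_inv[OF x]]
    show "hnorm (shift_sub_inv b x) \<le> suminf (pow_norms b) * hnorm x"
      by (simp add: real_sqrt_mult hnorm_def)
  qed
  show "\<exists>G. (\<forall>y\<in>l2 J. G y \<in> l2 J) \<and> (\<forall>x\<in>l2 J. \<forall>y\<in>l2 J. ip (shift_sub_inv b x) y = ip x (G y))"
  proof (intro exI conjI ballI)
    show "shift_sub_inv_adj b y \<in> l2 J" if "y \<in> l2 J" for y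
      using assms(1,3) that by (rule l2_shift_sub_inv_adj)
    fix x y assume x: "x \<in> l2 J" and y: "y \<in> l2 J"
    have "ip (shift_sub_inv b x) y = ip (shift_sub_inv b x) (shift_sub_adj a (shift_sub_inv_adj b y))"
      by (simp add: shift_sub_adj_shift_sub_inv_adj[OF assms(5) y])
    also have "\<dots> = ip (shift_sub a (shift_sub_inv b x)) (shift_sub_inv_adj b y)"
      using assms(1,2,3) x y
      by (intro ip_shift_sub[symmetric] l2_shift_sub_inv l2_shift_sub_inv_adj)
    also have "\<dots> = ip x (shift_sub_inv_adj b y)"
      by (simp add: shift_sub_shift_sub_inv[OF assms(4)])
    finally show "ip (shift_sub_inv b x) y = ip x (shift_sub_inv_adj b y)" .
  qed
qed

end

lemma binv_shift_sub_if_two_sided_inverse: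
  fixes J :: "'h::{real_inner,complete_space} \<Rightarrow>\<^sub>L 'h"
  assumes "cstruct J" "a \<in> BH J" "b \<in> BH J" "a o\<^sub>L b = id_blinfun" "b o\<^sub>L a = id_blinfun"
    and "(\<lambda>k. bpow b (Suc k)) \<in> l2 J"
  shows "binv J (shift_sub a)"
  unfolding binv_def
proof (intro conjI exI[of _ "shift_sub_inv b"] ballI)
  have "summable (pow_norms b)"
    using summable_norm_bpow_Suc_if_l2[OF assms(6)] by (simp add: pow_norms_def[abs_def])
  from badj_shift_sub_inv[OF this assms(1-5)] show "badj J (shift_sub_inv b)" .
  show "badj J (shift_sub a)" using assms(1,2) by (rule badj_shift_sub)
  show "shift_sub a (shift_sub_inv b x) = x" for x
    using assms(4) by (rule shift_sub_shift_sub_inv)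
  show "shift_sub_inv b (shift_sub a x) = x" for x
    using assms(5) by (rule shift_sub_injective) (simp add: shift_sub_shift_sub_inv[OF assms(4)])
qed

section \<open>Invertibility of S - aI\<close>

lemma binv_shift_sub_solvable_injective:
  assumes "binv J (shift_sub a)"
  shows "\<exists>u\<in>l2 J. shift_sub a u = (\<lambda>k. - e0 k)"
    and "\<forall>v\<in>l2 J. shift_sub a v = (\<lambda>_. 0) \<longrightarrow> v = (\<lambda>_. 0)"
proof -
  obtain G where G: "badj J G" "\<forall>x\<in>l2 J. G (shift_sub a x) = x \<and> shift_sub a (G x) = x"
    using assms unfolding binv_def by blast
  have "(\<lambda>k. - e0 k) \<in> l2 J" by (rule l2_minus[OF l2_e0])
  with G show "\<exists>u\<in>l2 J. shift_sub a u = (\<lambda>k. - e0 k)"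
    unfolding badj_def by blast
  have "shift_sub a (\<lambda>_. 0) = (\<lambda>_. 0)"
    by (simp add: fun_eq_iff shift_sub_def shift_def split: nat.split)
  with G(2) l2_zero show "\<forall>v\<in>l2 J. shift_sub a v = (\<lambda>_. 0) \<longrightarrow> v = (\<lambda>_. 0)"
    by metis
qed

lemma two_sided_inverse_if_solvable_injective:
  assumes "a \<in> BH J" "u \<in> l2 J" and u: "shift_sub a u = (\<lambda>k. - e0 k)"
    and inj: "\<forall>v\<in>l2 J. shift_sub a v = (\<lambda>_. 0) \<longrightarrow> v = (\<lambda>_. 0)"
  shows "u 0 o\<^sub>L a = id_blinfun" "u = (\<lambda>k. bpow (u 0) (Suc k))"
proof -
  have au: "a o\<^sub>L u k = shift u k + e0 k" for k
    using fun_cong[OF u, of k] by (cases k) (simp_all add: algebra_simps)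
  define v where "v k = (shift u k + e0 k) - (u k o\<^sub>L a)" for k
  have "v \<in> l2 J"
    unfolding v_def[abs_def] using assms(1,2) by (intro l2_diff l2_add l2_shift l2_e0 l2_compose_right)
  moreover have "shift_sub a v = (\<lambda>_. 0)"
  proof
    show "shift_sub a v k = 0" for k
      by (cases k) (simp_all add: v_def au compose.diff_right compose.add_right
          flip: blinfun_compose_assoc)
  qed
  ultimately have "v = (\<lambda>_. 0)" using inj by blast
  hence "v 0 = 0" by simp
  thus ua: "u 0 o\<^sub>L a = id_blinfun" by (simp add: v_def)
  have "u k = bpow (u 0) (Suc k)" for k
  proof (induction k)
    case (Suc k)
    have "u (Suc k) = u 0 o\<^sub>L (a o\<^sub>L u (Suc k))" by (simp add: ua flip: blinfun_compose_assoc)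
    thus ?case by (simp add: au Suc.IH bpow_Suc[of "u 0" "Suc k"])
  qed (simp add: bpow_Suc)
  thus "u = (\<lambda>k. bpow (u 0) (Suc k))" by blast
qed

lemma binv_shift_sub_iff:
  fixes J :: "'h::{real_inner,complete_space} \<Rightarrow>\<^sub>L 'h"
  assumes "cstruct J" "a \<in> BH J"
  shows "binv J (shift_sub a) \<longleftrightarrow>
    (\<exists>u\<in>l2 J. shift_sub a u = (\<lambda>k. - e0 k)) \<and> (\<forall>v\<in>l2 J. shift_sub a v = (\<lambda>_. 0) \<longrightarrow> v = (\<lambda>_. 0))"
proof (intro iffI conjI)
  assume "(\<exists>u\<in>l2 J. shift_sub a u = (\<lambda>k. - e0 k)) \<and> (\<forall>v\<in>l2 J. shift_sub a v = (\<lambda>_. 0) \<longrightarrow> v = (\<lambda>_. 0))"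
  then obtain u where u: "u \<in> l2 J" "shift_sub a u = (\<lambda>k. - e0 k)"
    and inj: "\<forall>v\<in>l2 J. shift_sub a v = (\<lambda>_. 0) \<longrightarrow> v = (\<lambda>_. 0)" by blast
  note inverse = two_sided_inverse_if_solvable_injective[OF assms(2) u inj]
  have "a o\<^sub>L u 0 = id_blinfun" using fun_cong[OF u(2), of 0] by simp
  moreover have "(\<lambda>k. bpow (u 0) (Suc k)) \<in> l2 J" using u(1) inverse(2) by simp
  ultimately show "binv J (shift_sub a)"
    using assms inverse(1) l2_BH[OF u(1)] by (intro binv_shift_sub_if_two_sided_inverse)
qed (use binv_shift_sub_solvable_injective in blast)+

theorem proposition2p3:
  fixes J :: "'h::{real_inner,complete_space} \<Rightarrow>\<^sub>L 'h"
    and B :: "('h \<Rightarrow>\<^sub>L 'h) \<Rightarrow> ('h \<Rightarrow>\<^sub>L 'h)"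
  assumes "cstruct J"
    and "\<forall>T\<in>BH J. rinv J T \<longrightarrow> B T \<in> BH J \<and> T o\<^sub>L B T = id_blinfun"
  shows "Aspec J shift = Zset J B \<union> Wset J B \<union> {T \<in> BH J. \<not> rinv J T}"
proof (rule set_eqI)
  fix a
  show "a \<in> Aspec J shift \<longleftrightarrow> a \<in> Zset J B \<union> Wset J B \<union> {T \<in> BH J. \<not> rinv J T}"
  proof (cases "a \<in> BH J")
    case False
    thus ?thesis by (simp add: Aspec_def Zset_def Wset_def)
  next
    case a: True
    have "binv J (shift_sub a) \<longleftrightarrow> rinv J a \<and> a \<notin> Zset J B \<and> a \<notin> Wset J B"
    proof (cases "rinv J a")
      case True
      thus ?thesis using binv_shift_sub_iff[OF assms(1) a]
          Zset_iff[OF assms(2) a True] Wset_iff[OF assms(2) a True] by blast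
    next
      case False
      thus ?thesis using binv_shift_sub_iff[OF assms(1) a] rinv_if_shift_sub_eq_minus_e0 by blast
    qed
    with a show ?thesis by (auto simp: Aspec_shift_iff)
  qed
qed

end
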